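(* Let $d\ge3$. The collection of all universally simplified $d$-dimensional copulas is dense in $(\mathcal{C}^d,d_\infty)$.
   Context: $\mathcal{C}^d$ is the set of $d$-dimensional copulas and $d_\infty(C_1,C_2)=\max_{\mathbf{x}\in[0,1]^d}|C_1(\mathbf{x})-C_2(\mathbf{x})|$. For $C\in\mathcal{C}^d$ and $J\subseteq\{1,\dots,d\}$, $C_J$ is the marginal copula of the coordinates in $J$ and $\mu_{C_J}$ its measure. For $J$ with $2\le|J|\le d$ and $L\subseteq J$ with $1\le|L|\le|J|-2$, let $K_{C_J}(\mathbf{t},\cdot)$ be (a version of) the regular conditional distribution of the coordinates in $J\setminus L$ given the coordinates in $L$ equal $\mathbf{t}$, and $F_{j|L}(\cdot|\mathbf{t})$, $j\in J\setminus L$, its univariate marginal distribution functions. $C$ is universally simplified if for all such $J,L$ (with $J\setminus L=\{j_1<\dots<j_m\}$): (U1) there is an $m$-dimensional copula $A$ with $C_J(\mathbf{u})=\int_{[\mathbf{0},\mathbf{u}_L]}A(F_{j_1|L}(u_{j_1}|\mathbf{t}),\dots,F_{j_m|L}(u_{j_m}|\mathbf{t}))\,d\mu_{C_L}(\mathbf{t})$ for all $\mathbf{u}$, where $\mathbf{u}_L$ is the subvector of coordinates in $L$; and (U2) $F_{j|L}(\cdot|\mathbf{t})$ is continuous for $\mu_{C_L}$-a.e. $\mathbf{t}$, for each $j\in J\setminus L$. *)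

theory Defs
  imports "HOL-Probability.Probability"
begin

text \<open>Points of [0,1]^I are functions nat => real; only the coordinates in the
  index set I matter.  A copula on index set I is identified with its
  probability measure on the product of Borel sigma-algebras over I
  (uniform univariate margins); its copula function is its distribution function.\<close>

definition cube :: "nat set \<Rightarrow> (nat \<Rightarrow> real) set" where
  "cube I = {u. \<forall>i\<in>I. 0 \<le> u i \<and> u i \<le> 1}"

definition cdf_on :: "nat set \<Rightarrow> (nat \<Rightarrow> real) measure \<Rightarrow> (nat \<Rightarrow> real) \<Rightarrow> real" where
  "cdf_on I \<mu> u = measure \<mu> {x \<in> space \<mu>. \<forall>i\<in>I. x i \<le> u i}"

definition copula_on :: "nat set \<Rightarrow> (nat \<Rightarrow> real) measure \<Rightarrow> bool" where
  "copula_on I \<mu> \<longleftrightarrow> prob_space \<mu> \<and> sets \<mu> = sets (\<Pi>\<^sub>M i\<in>I. borel) \<and>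
     (\<forall>i\<in>I. \<forall>s\<in>{0..1}. measure \<mu> {x \<in> space \<mu>. x i \<le> s} = s)"

definition copula_dist :: "nat \<Rightarrow> (nat \<Rightarrow> real) measure \<Rightarrow> (nat \<Rightarrow> real) measure \<Rightarrow> real" where
  "copula_dist d \<mu> \<nu> = (SUP u\<in>cube {1..d}. \<bar>cdf_on {1..d} \<mu> u - cdf_on {1..d} \<nu> u\<bar>)"

definition marg :: "nat set \<Rightarrow> (nat \<Rightarrow> real) measure \<Rightarrow> (nat \<Rightarrow> real) measure" where
  "marg J \<mu> = distr \<mu> (\<Pi>\<^sub>M i\<in>J. borel) (\<lambda>x. restrict x J)"

text \<open>K is (a version of) the regular conditional distribution of the coordinates
  in M given the coordinates in L, for a measure \<nu> on the coordinates L \<union> M.\<close>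
definition is_rcd :: "nat set \<Rightarrow> nat set \<Rightarrow> (nat \<Rightarrow> real) measure
    \<Rightarrow> ((nat \<Rightarrow> real) \<Rightarrow> (nat \<Rightarrow> real) measure) \<Rightarrow> bool" where
  "is_rcd L M \<nu> K \<longleftrightarrow>
     K \<in> measurable (\<Pi>\<^sub>M i\<in>L. borel) (prob_algebra (\<Pi>\<^sub>M i\<in>M. borel)) \<and>
     \<nu> = bind (marg L \<nu>) (\<lambda>t. distr (K t) (\<Pi>\<^sub>M i\<in>L \<union> M. borel) (\<lambda>y. merge L M (t, y)))"

definition cond_df :: "((nat \<Rightarrow> real) \<Rightarrow> (nat \<Rightarrow> real) measure) \<Rightarrow> nat \<Rightarrow> (nat \<Rightarrow> real) \<Rightarrow> real \<Rightarrow> real" where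
  "cond_df K j t s = measure (K t) {y \<in> space (K t). y j \<le> s}"

definition univ_simplified :: "nat \<Rightarrow> (nat \<Rightarrow> real) measure \<Rightarrow> bool" where
  "univ_simplified d \<mu> \<longleftrightarrow>
    (\<forall>J L K. J \<subseteq> {1..d} \<and> 2 \<le> card J \<and> L \<subseteq> J \<and> 1 \<le> card L \<and> card L \<le> card J - 2 \<and>
       is_rcd L (J - L) (marg J \<mu>) K \<longrightarrow>
       \<comment> \<open>(U1)\<close>
       (\<exists>A. copula_on (J - L) A \<and>
          (\<forall>u\<in>cube J. cdf_on J (marg J \<mu>) u =
             (\<integral>t. indicator {t. \<forall>l\<in>L. 0 \<le> t l \<and> t l \<le> u l} t *
                    cdf_on (J - L) A (\<lambda>j. cond_df K j t (u j)) \<partial>(marg L \<mu>)))) \<and>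
       \<comment> \<open>(U2)\<close>
       (\<forall>j\<in>J - L. AE t in marg L \<mu>. continuous_on UNIV (cond_df K j t)))"

end

theory Submission
  imports Defs
begin

text \<open>Cut the unit cube into the grid cells of mesh \<open>1/n\<close>. The patchwork of a copula \<open>\<mu>\<close>
  moves the mass that \<open>\<mu>\<close> gives to each grid cell into a small cube inside that cell, with side
  length equal to that mass, and spreads it uniformly there. In each coordinate the sides of the
  cubes over one grid interval are laid end to end; they fill it exactly, because the cells over
  it have total mass \<open>1/n\<close>, so the patchwork is again a copula. It gives every grid cell the
  same mass as \<open>\<mu>\<close>, so the two distribution functions agree at the grid points, and the
  Lipschitz property of copulas bounds their distance by \<open>d/n\<close>.

  The sides of distinct cubes never overlap, so any single coordinate of a point of the patchwork
  determines its cube, and given the cube the other coordinates are independent and uniform on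
  its sides. Hence every conditional distribution is the independence copula applied to
  continuous conditional margins: the patchwork is universally simplified.\<close>

lemma PiE_UN_distrib:
  "PiE I (\<lambda>i. \<Union>b\<in>R i. S i b) = (\<Union>c\<in>PiE I R. PiE I (\<lambda>i. S i (c i)))"
proof
  show "PiE I (\<lambda>i. \<Union>b\<in>R i. S i b) \<subseteq> (\<Union>c\<in>PiE I R. PiE I (\<lambda>i. S i (c i)))"
  proof
    fix x assume x: "x \<in> PiE I (\<lambda>i. \<Union>b\<in>R i. S i b)"
    define c where "c = restrict (\<lambda>i. SOME b. b \<in> R i \<and> x i \<in> S i b) I"
    have ex: "\<exists>b. b \<in> R i \<and> x i \<in> S i b" if "i \<in> I" for i
      using x that by (auto simp: PiE_def Pi_def)
    have "c i \<in> R i \<and> x i \<in> S i (c i)" if "i \<in> I" for i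
      using someI_ex[OF ex[OF that]] that unfolding c_def by simp
    then have "c \<in> PiE I R" "x \<in> PiE I (\<lambda>i. S i (c i))"
      using x unfolding c_def by (auto simp: PiE_def Pi_def)
    then show "x \<in> (\<Union>c\<in>PiE I R. PiE I (\<lambda>i. S i (c i)))" by blast
  qed
qed (auto simp: PiE_def Pi_def)

lemma nn_integral_sum_mult_indicator:
  assumes C: "finite C" and a: "\<And>c. c \<in> C \<Longrightarrow> 0 \<le> a c" and B: "\<And>c. c \<in> C \<Longrightarrow> B c \<in> sets M"
  shows "(\<integral>\<^sup>+x. ennreal (\<Sum>c\<in>C. a c * indicator (B c) x) \<partial>M) = (\<Sum>c\<in>C. ennreal (a c) * emeasure M (B c))"
proof -
  have "ennreal (\<Sum>c\<in>C. a c * indicator (B c) x) = (\<Sum>c\<in>C. ennreal (a c * indicator (B c) x))" for x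
    using a by (intro sum_ennreal[symmetric]) auto
  also have "\<dots> x = (\<Sum>c\<in>C. ennreal (a c) * indicator (B c) x)" for x
    by (intro sum.cong) (auto simp: indicator_def)
  finally have "(\<integral>\<^sup>+x. ennreal (\<Sum>c\<in>C. a c * indicator (B c) x) \<partial>M) =
      (\<integral>\<^sup>+x. (\<Sum>c\<in>C. ennreal (a c) * indicator (B c) x) \<partial>M)"
    by (intro nn_integral_cong) simp
  also have "\<dots> = (\<Sum>c\<in>C. \<integral>\<^sup>+x. ennreal (a c) * indicator (B c) x \<partial>M)"
    using B by (intro nn_integral_sum) auto
  also have "\<dots> = (\<Sum>c\<in>C. ennreal (a c) * emeasure M (B c))"
    using B by (intro sum.cong refl nn_integral_cmult_indicator)
  finally show ?thesis .
qed

lemma eq_if_right_continuous_continuous_eq_on_Rats: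
  fixes F G :: "real \<Rightarrow> real"
  assumes F: "\<And>s. continuous (at_right s) F" and G: "continuous_on UNIV G"
    and eq: "\<And>q. q \<in> \<rat> \<Longrightarrow> F q = G q"
  shows "F = G"
proof
  fix s
  show "F s = G s"
  proof (rule ccontr)
    assume "F s \<noteq> G s"
    define e where "e = \<bar>F s - G s\<bar> / 2"
    have e: "0 < e" using \<open>F s \<noteq> G s\<close> unfolding e_def by simp
    obtain d1 where d1: "0 < d1" "\<And>x. s < x \<Longrightarrow> dist x s < d1 \<Longrightarrow> dist (F x) (F s) < e"
      using F[of s] e unfolding continuous_within_eps_delta by force
    obtain d2 where d2: "0 < d2" "\<And>x. dist x s < d2 \<Longrightarrow> dist (G x) (G s) < e"
      using G e unfolding continuous_on_eq_continuous_at[OF open_UNIV] continuous_at_eps_delta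
      by blast
    obtain q where q: "q \<in> \<rat>" "s < q" "q < s + min d1 d2"
      using Rats_dense_in_real[of s "s + min d1 d2"] d1(1) d2(1) by auto
    then have "\<bar>F q - F s\<bar> < e" "\<bar>G q - G s\<bar> < e"
      using d1(2)[of q] d2(2)[of q] by (auto simp: dist_real_def)
    with eq[OF q(1)] show False unfolding e_def by (simp add: abs_if split: if_splits)
  qed
qed

lemma measure_Ioc_Int_atMost:
  fixes p q s :: real
  assumes "p \<le> q"
  shows "measure lborel ({p<..q} \<inter> {..s}) = max 0 (min q s - p)"
proof (cases "p \<le> min q s")
  case True
  then have "{p<..q} \<inter> {..s} = {p<..min q s}" by auto
  then show ?thesis using True by simp
next
  case False
  then have "{p<..q} \<inter> {..s} = {}" by auto
  then show ?thesis using False assms by simp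
qed

lemma sum_measure_Int_le_unit:
  fixes X :: "'a \<Rightarrow> real set"
  assumes fin: "finite C" and disj: "disjoint_family_on X C"
    and X: "\<And>c. c \<in> C \<Longrightarrow> X c \<in> fmeasurable lborel" "\<And>c. c \<in> C \<Longrightarrow> X c \<subseteq> {0<..1}"
    and Y: "Y \<in> sets borel"
  shows "(\<Sum>c\<in>C. measure lborel (X c \<inter> Y)) \<le> measure lborel ({0<..1} \<inter> Y)"
proof -
  have "(\<Sum>c\<in>C. measure lborel (X c \<inter> Y)) = measure lborel (\<Union>c\<in>C. X c \<inter> Y)"
  proof (rule measure_UNION'[symmetric, OF fin])
    show "X c \<inter> Y \<in> fmeasurable lborel" if "c \<in> C" for c
      using X(1)[OF that] Y by (intro fmeasurable_Int_fmeasurable) simp_all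
    show "pairwise (\<lambda>c c'. disjnt (X c \<inter> Y) (X c' \<inter> Y)) C"
      using disj unfolding pairwise_def disjnt_def disjoint_family_on_def by blast
  qed
  also have "\<dots> \<le> measure lborel ({0<..1} \<inter> Y)"
  proof (rule measure_mono_fmeasurable)
    show "(\<Union>c\<in>C. X c \<inter> Y) \<subseteq> {0<..1} \<inter> Y" using X(2) by blast
    show "(\<Union>c\<in>C. X c \<inter> Y) \<in> sets lborel" using fin X(1) Y by auto
    show "{0<..1} \<inter> Y \<in> fmeasurable lborel"
      using Y by (intro fmeasurable_Int_fmeasurable) (simp_all add: fmeasurable_def)
  qed
  finally show ?thesis .
qed

text \<open>Disjoint subsets of \<open>(0,1]\<close> of total length 1 fill \<open>(0,1]\<close> up to a null set.\<close>

lemma sum_measure_Int_atMost_eq: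
  fixes X :: "'a \<Rightarrow> real set"
  assumes fin: "finite C" and disj: "disjoint_family_on X C"
    and X: "\<And>c. c \<in> C \<Longrightarrow> X c \<in> sets borel" "\<And>c. c \<in> C \<Longrightarrow> X c \<subseteq> {0<..1}"
    and total: "(\<Sum>c\<in>C. measure lborel (X c)) = 1" and s: "0 \<le> s" "s \<le> 1"
  shows "(\<Sum>c\<in>C. measure lborel (X c \<inter> {..s})) = s"
proof -
  have fmeas: "X c \<in> fmeasurable lborel" if "c \<in> C" for c
  proof (rule fmeasurableI2[of "{0<..1}"])
    show "{0<..1::real} \<in> fmeasurable lborel" by (simp add: fmeasurable_def)
  qed (use X that in simp_all)
  note le = sum_measure_Int_le_unit[OF fin disj fmeas X(2)]
  have "{0<..1} \<inter> {..s} = {0<..s}" "{0<..1} \<inter> {s<..} = {s<..1}" using s by auto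
  then have le_s: "(\<Sum>c\<in>C. measure lborel (X c \<inter> {..s})) \<le> s"
    and le_1s: "(\<Sum>c\<in>C. measure lborel (X c \<inter> {s<..})) \<le> 1 - s"
    using le[of "{..s}"] le[of "{s<..}"] s by auto
  have "measure lborel (X c \<inter> {..s}) + measure lborel (X c \<inter> {s<..}) = measure lborel (X c)"
    if "c \<in> C" for c
  proof -
    have "(X c \<inter> {..s}) \<inter> (X c \<inter> {s<..}) = {}" "(X c \<inter> {..s}) \<union> (X c \<inter> {s<..}) = X c" by auto
    then show ?thesis
      using measure_Un3[OF fmeasurable_Int_fmeasurable[OF fmeas[OF that]]
          fmeasurable_Int_fmeasurable[OF fmeas[OF that]], of "{..s}" "{s<..}"]
      by simp
  qed
  then have "(\<Sum>c\<in>C. measure lborel (X c \<inter> {..s})) + (\<Sum>c\<in>C. measure lborel (X c \<inter> {s<..})) = 1"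
    using total by (simp add: sum.distrib[symmetric])
  with le_s le_1s show ?thesis by linarith
qed

section \<open>Copulas and their distribution functions\<close>

lemma copula_onD:
  assumes "copula_on I P"
  shows "prob_space P" "sets P = sets (PiM I (\<lambda>_. borel))" "space P = PiE I (\<lambda>_. UNIV)"
proof -
  show "prob_space P" "sets P = sets (PiM I (\<lambda>_. borel))"
    using assms unfolding copula_on_def by auto
  then have "space P = space (PiM I (\<lambda>_. borel))" by (intro sets_eq_imp_space_eq) simp
  then show "space P = PiE I (\<lambda>_. UNIV)" by (simp add: space_PiM)
qed

lemma copula_on_PiE_sets:
  assumes "copula_on I P" "finite I" "\<And>i. i \<in> I \<Longrightarrow> A i \<in> sets borel"
  shows "PiE I A \<in> sets P"
  using copula_onD(2)[OF assms(1)] sets_PiM_I_finite[OF assms(2), of A "\<lambda>_. borel"] assms(3)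
  by simp

lemma copula_on_slab:
  assumes cop: "copula_on I P" and fin: "finite I" and i: "i \<in> I"
    and ab: "0 \<le> a" "a \<le> b" "b \<le> 1"
  shows "measure P {x\<in>space P. a < x i \<and> x i \<le> b} = b - a"
proof -
  interpret prob_space P using copula_onD(1)[OF cop] .
  have le_ev: "{x\<in>space P. x i \<le> s} \<in> events" for s
  proof -
    have "{x\<in>space P. x i \<le> s} = PiE I (\<lambda>k. if k = i then {..s} else UNIV)"
      using copula_onD(3)[OF cop] i by (auto simp: PiE_def Pi_def)
    then show ?thesis using copula_on_PiE_sets[OF cop fin] by simp
  qed
  have "{x\<in>space P. a < x i \<and> x i \<le> b} = {x\<in>space P. x i \<le> b} - {x\<in>space P. x i \<le> a}"
    by auto
  moreover have "measure P ({x\<in>space P. x i \<le> b} - {x\<in>space P. x i \<le> a}) =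
      measure P {x\<in>space P. x i \<le> b} - measure P {x\<in>space P. x i \<le> a}"
    using ab le_ev by (intro finite_measure_Diff) auto
  ultimately show ?thesis using cop i ab unfolding copula_on_def by simp
qed

lemma cdf_on_mono_copula:
  assumes cop: "copula_on I P" and fin: "finite I" and uv: "\<And>i. i \<in> I \<Longrightarrow> u i \<le> v i"
  shows "cdf_on I P u \<le> cdf_on I P v"
proof -
  interpret prob_space P using copula_onD(1)[OF cop] .
  have "{x\<in>space P. \<forall>i\<in>I. x i \<le> v i} = PiE I (\<lambda>i. {..v i})"
    using copula_onD(3)[OF cop] by (auto simp: PiE_def Pi_def)
  then have "{x\<in>space P. \<forall>i\<in>I. x i \<le> v i} \<in> events"
    using copula_on_PiE_sets[OF cop fin] by simp
  then show ?thesis unfolding cdf_on_def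
    using uv by (intro finite_measure_mono) (auto intro: order_trans)
qed

text \<open>Lipschitz property of copulas: the points below \<open>u\<close> but not below \<open>v\<close> lie in one of the
  slabs \<open>v i < x i \<le> u i\<close>, which have mass \<open>u i - v i\<close>.\<close>

lemma cdf_on_copula_le_add_sum_diff:
  assumes cop: "copula_on I P" and fin: "finite I"
    and uv: "\<And>i. i \<in> I \<Longrightarrow> 0 \<le> v i \<and> v i \<le> u i \<and> u i \<le> 1"
  shows "cdf_on I P u \<le> cdf_on I P v + (\<Sum>i\<in>I. u i - v i)"
proof -
  interpret prob_space P using copula_onD(1)[OF cop] .
  let ?below = "\<lambda>w. {x\<in>space P. \<forall>i\<in>I. x i \<le> w i}"
  let ?slab = "\<lambda>i. {x\<in>space P. v i < x i \<and> x i \<le> u i}"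
  have space: "space P = PiE I (\<lambda>_. UNIV)" by (rule copula_onD(3)[OF cop])
  have below_ev: "?below v \<in> events"
  proof -
    have "?below v = PiE I (\<lambda>i. {..v i})" using space by (auto simp: PiE_def Pi_def)
    then show ?thesis using copula_on_PiE_sets[OF cop fin] by simp
  qed
  have slab_ev: "?slab i \<in> events" if "i \<in> I" for i
  proof -
    have "?slab i = PiE I (\<lambda>k. if k = i then {v i<..u i} else UNIV)"
      using space that by (auto simp: PiE_def Pi_def)
    then show ?thesis using copula_on_PiE_sets[OF cop fin] by simp
  qed
  have cover: "?below u \<subseteq> ?below v \<union> (\<Union>i\<in>I. ?slab i)"
  proof
    fix x assume x: "x \<in> ?below u"
    show "x \<in> ?below v \<union> (\<Union>i\<in>I. ?slab i)"
    proof (cases "\<forall>i\<in>I. x i \<le> v i")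
      case True then show ?thesis using x by blast
    next
      case False
      then obtain i where "i \<in> I" "\<not> x i \<le> v i" by blast
      then show ?thesis using x by force
    qed
  qed
  have "cdf_on I P u \<le> prob (?below v \<union> (\<Union>i\<in>I. ?slab i))"
    unfolding cdf_on_def using cover below_ev slab_ev by (intro finite_measure_mono) auto
  also have "\<dots> \<le> prob (?below v) + prob (\<Union>i\<in>I. ?slab i)"
    using below_ev slab_ev by (intro measure_Un_le) auto
  also have "prob (\<Union>i\<in>I. ?slab i) \<le> (\<Sum>i\<in>I. prob (?slab i))"
    using slab_ev by (intro measure_UNION_le fin) auto
  also have "(\<Sum>i\<in>I. prob (?slab i)) = (\<Sum>i\<in>I. u i - v i)"
    using uv by (intro sum.cong refl copula_on_slab[OF cop fin]) auto
  finally show ?thesis unfolding cdf_on_def by simp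
qed

lemma cdf_on_copula_near_grid_point:
  assumes cop: "copula_on I P" and fin: "finite I" and n: "0 < n" and u: "u \<in> cube I"
  defines "a \<equiv> \<lambda>i. nat \<lfloor>real n * u i\<rfloor>"
  shows "cdf_on I P (\<lambda>i. real (a i) / n) \<le> cdf_on I P u"
    and "cdf_on I P u \<le> cdf_on I P (\<lambda>i. real (a i) / n) + real (card I) / n"
proof -
  have below: "real (a i) / n \<le> u i" and close: "u i - real (a i) / n \<le> 1 / n"
    and nonneg: "0 \<le> u i" and le1: "u i \<le> 1" if "i \<in> I" for i
  proof -
    show "0 \<le> u i" "u i \<le> 1" using u that unfolding cube_def by auto
    then have a: "real (a i) = of_int \<lfloor>real n * u i\<rfloor>" unfolding a_def by simp
    show "real (a i) / n \<le> u i" using n unfolding a by (simp add: divide_le_eq mult.commute)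
    have "real n * u i < real (a i) + 1" unfolding a by linarith
    have "u i - real (a i) / n = (real n * u i - real (a i)) / n" using n by (simp add: field_simps)
    also have "\<dots> \<le> 1 / n" using \<open>real n * u i < real (a i) + 1\<close>
      by (intro divide_right_mono) auto
    finally show "u i - real (a i) / n \<le> 1 / n" .
  qed
  show "cdf_on I P (\<lambda>i. real (a i) / n) \<le> cdf_on I P u"
    by (rule cdf_on_mono_copula[OF cop fin below])
  have "cdf_on I P u \<le> cdf_on I P (\<lambda>i. real (a i) / n) + (\<Sum>i\<in>I. u i - real (a i) / n)"
    using below nonneg le1 by (intro cdf_on_copula_le_add_sum_diff[OF cop fin]) auto
  also have "(\<Sum>i\<in>I. u i - real (a i) / n) \<le> (\<Sum>i\<in>I. 1 / n)"
    by (intro sum_mono close)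
  finally show "cdf_on I P u \<le> cdf_on I P (\<lambda>i. real (a i) / n) + real (card I) / n"
    by simp
qed

lemma copula_dist_le_if_eq_on_grid:
  assumes \<mu>: "copula_on {1..d} \<mu>" and \<nu>: "copula_on {1..d} \<nu>" and n: "0 < n"
    and grid: "\<And>a. (\<And>i. i \<in> {1..d} \<Longrightarrow> a i \<le> n) \<Longrightarrow>
      cdf_on {1..d} \<mu> (\<lambda>i. real (a i) / n) = cdf_on {1..d} \<nu> (\<lambda>i. real (a i) / n)"
  shows "copula_dist d \<mu> \<nu> \<le> real d / n"
  unfolding copula_dist_def
proof (rule cSUP_least)
  show "cube {1..d} \<noteq> {}" unfolding cube_def by (auto intro!: exI[of _ "\<lambda>_. 0"])
  fix u assume u: "u \<in> cube {1..d}"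
  define a where "a i = nat \<lfloor>real n * u i\<rfloor>" for i
  have "a i \<le> n" if "i \<in> {1..d}" for i
  proof -
    have "u i \<le> 1" using u that unfolding cube_def by auto
    then have "real n * u i \<le> real n" using n by simp
    then show ?thesis unfolding a_def by (simp add: nat_le_iff floor_le_iff)
  qed
  then have "cdf_on {1..d} \<mu> (\<lambda>i. real (a i) / n) = cdf_on {1..d} \<nu> (\<lambda>i. real (a i) / n)"
    by (rule grid)
  then show "\<bar>cdf_on {1..d} \<mu> u - cdf_on {1..d} \<nu> u\<bar> \<le> real d / n"
    using cdf_on_copula_near_grid_point[OF \<mu> _ n u] cdf_on_copula_near_grid_point[OF \<nu> _ n u]
    unfolding a_def by fastforce
qed

definition indep_copula :: "nat set \<Rightarrow> (nat \<Rightarrow> real) measure" where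
  "indep_copula S = PiM S (\<lambda>_. uniform_measure lborel {0..1})"

lemma emeasure_indep_copula_PiE:
  assumes "finite S" "\<And>i. i \<in> S \<Longrightarrow> A i \<in> sets borel"
  shows "emeasure (indep_copula S) (PiE S A) = (\<Prod>i\<in>S. emeasure lborel ({0..1} \<inter> A i))"
proof -
  interpret U: prob_space "uniform_measure lborel {0..1::real}"
    by (intro prob_space_uniform_measure) auto
  interpret product_sigma_finite "\<lambda>_::nat. uniform_measure lborel {0..1::real}" by standard
  have "emeasure (indep_copula S) (PiE S A) = (\<Prod>i\<in>S. emeasure (uniform_measure lborel {0..1}) (A i))"
    unfolding indep_copula_def using assms by (intro emeasure_PiM) auto
  also have "\<dots> = (\<Prod>i\<in>S. emeasure lborel ({0..1} \<inter> A i))"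
    using assms(2) by (intro prod.cong refl) (simp add: emeasure_uniform_measure divide_ennreal_def)
  finally show ?thesis .
qed

lemma space_indep_copula: "space (indep_copula S) = PiE S (\<lambda>_. UNIV)"
  unfolding indep_copula_def by (simp add: space_PiM)

lemma copula_on_indep_copula:
  assumes S: "finite S"
  shows "copula_on S (indep_copula S)"
  unfolding copula_on_def
proof (intro conjI ballI)
  show "prob_space (indep_copula S)"
    unfolding indep_copula_def by (intro prob_space_PiM prob_space_uniform_measure) auto
  show "sets (indep_copula S) = sets (PiM S (\<lambda>_. borel))"
    unfolding indep_copula_def by (intro sets_PiM_cong) auto
  fix i s assume i: "i \<in> S" and s: "s \<in> {0..1::real}"
  have "{x\<in>space (indep_copula S). x i \<le> s} = PiE S (\<lambda>k. if k = i then {..s} else UNIV)"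
    unfolding space_indep_copula using i by (auto simp: PiE_def Pi_def)
  moreover have "emeasure (indep_copula S) (PiE S (\<lambda>k. if k = i then {..s} else UNIV)) = ennreal s"
  proof -
    have "{0..1} \<inter> {..s} = {0..s}" using s by auto
    then have "(\<Prod>k\<in>S. emeasure lborel ({0..1} \<inter> (if k = i then {..s} else UNIV))) =
        (\<Prod>k\<in>S. if k = i then ennreal s else 1)"
      using s by (intro prod.cong refl) auto
    then show ?thesis using S i by (simp add: emeasure_indep_copula_PiE)
  qed
  ultimately show "measure (indep_copula S) {x\<in>space (indep_copula S). x i \<le> s} = s"
    using s by (intro measure_eq_emeasure_eq_ennreal) auto
qed

lemma cdf_on_indep_copula:
  assumes S: "finite S" and v: "\<And>i. i \<in> S \<Longrightarrow> 0 \<le> v i \<and> v i \<le> 1"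
  shows "cdf_on S (indep_copula S) v = (\<Prod>i\<in>S. v i)"
proof -
  have "{x\<in>space (indep_copula S). \<forall>i\<in>S. x i \<le> v i} = PiE S (\<lambda>i. {..v i})"
    unfolding space_indep_copula by (auto simp: PiE_def Pi_def)
  moreover have "emeasure (indep_copula S) (PiE S (\<lambda>i. {..v i})) = (\<Prod>i\<in>S. ennreal (v i))"
  proof -
    have "{0..1} \<inter> {..v i} = {0..v i}" if "i \<in> S" for i using v[OF that] by auto
    then show ?thesis using S v by (simp add: emeasure_indep_copula_PiE cong: prod.cong)
  qed
  ultimately show ?thesis unfolding cdf_on_def
    using v by (intro measure_eq_emeasure_eq_ennreal prod_nonneg) (auto simp: prod_ennreal)
qed

section \<open>Marginals and regular conditional distributions\<close>

lemma sets_marg: "sets (marg J P) = sets (PiM J (\<lambda>_. borel))"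
  by (simp add: marg_def)

lemma space_marg: "space (marg J P) = PiE J (\<lambda>_. UNIV)"
  by (simp add: marg_def space_PiM)

lemma measurable_restrict_PiM_borel:
  assumes "sets P = sets (PiM I (\<lambda>_. borel))" "J \<subseteq> I"
  shows "(\<lambda>x. restrict x J) \<in> measurable P (PiM J (\<lambda>_. borel :: real measure))"
  using measurable_restrict_subset[OF assms(2), of "\<lambda>_. borel :: real measure"] assms(1)
  by (simp cong: measurable_cong_sets)

lemma prob_space_marg:
  assumes "prob_space P" "sets P = sets (PiM I (\<lambda>_. borel))" "J \<subseteq> I"
  shows "prob_space (marg J P)"
  unfolding marg_def
  by (rule prob_space.prob_space_distr[OF assms(1) measurable_restrict_PiM_borel[OF assms(2,3)]])

lemma marg_marg:
  assumes "sets P = sets (PiM I (\<lambda>_. borel))" "L \<subseteq> J" "J \<subseteq> I"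
  shows "marg L (marg J P) = marg L P"
proof -
  have "marg L (marg J P) = distr P (PiM L (\<lambda>_. borel)) ((\<lambda>x. restrict x L) \<circ> (\<lambda>x. restrict x J))"
    unfolding marg_def
    by (rule distr_distr[OF measurable_restrict_subset[OF assms(2)]
          measurable_restrict_PiM_borel[OF assms(1,3)]])
  also have "\<dots> = marg L P"
    unfolding marg_def using assms(2) by (intro distr_cong) (auto simp: fun_eq_iff restrict_def)
  finally show ?thesis .
qed

lemma emeasure_marg_PiE:
  assumes P: "sets P = sets (PiM I (\<lambda>_. borel))" and J: "J \<subseteq> I" "finite J"
    and A: "\<And>i. i \<in> J \<Longrightarrow> A i \<in> sets borel"
  shows "emeasure (marg J P) (PiE J A) = emeasure P (PiE I (\<lambda>i. if i \<in> J then A i else UNIV))"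
proof -
  have "space P = PiE I (\<lambda>_. UNIV)"
    using sets_eq_imp_space_eq[OF P] by (simp add: space_PiM)
  then have "(\<lambda>x. restrict x J) -` PiE J A \<inter> space P = PiE I (\<lambda>i. if i \<in> J then A i else UNIV)"
    using J by (auto simp: PiE_def Pi_def)
  moreover have "PiE J A \<in> sets (PiM J (\<lambda>_. borel))" using A J by (intro sets_PiM_I_finite) auto
  ultimately show ?thesis
    unfolding marg_def by (simp add: emeasure_distr measurable_restrict_PiM_borel[OF P J(1)])
qed

lemma is_rcd_kernel:
  assumes rcd: "is_rcd L M P K" and t: "t \<in> PiE L (\<lambda>_. UNIV)"
  shows "prob_space (K t)" "sets (K t) = sets (PiM M (\<lambda>_. borel))"
    "space (K t) = PiE M (\<lambda>_. UNIV)"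
proof -
  have "t \<in> space (PiM L (\<lambda>_. borel :: real measure))" using t by (simp add: space_PiM)
  then have "K t \<in> space (prob_algebra (PiM M (\<lambda>_. borel)))"
    using rcd unfolding is_rcd_def by (auto intro: measurable_space)
  then show "prob_space (K t)" "sets (K t) = sets (PiM M (\<lambda>_. borel))"
    by (auto simp: space_prob_algebra)
  then have "space (K t) = space (PiM M (\<lambda>_. borel :: real measure))"
    by (intro sets_eq_imp_space_eq) simp
  then show "space (K t) = PiE M (\<lambda>_. UNIV)" by (simp add: space_PiM)
qed

lemma is_rcd_measurable_subprob:
  assumes "is_rcd L M P K"
  shows "K \<in> measurable (marg L P) (subprob_algebra (PiM M (\<lambda>_. borel)))"
  using measurable_prob_algebraD assms unfolding is_rcd_def
  by (auto simp: sets_marg cong: measurable_cong_sets)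

lemma emeasure_cond_le_measurable:
  assumes rcd: "is_rcd L M P K" and j: "j \<in> M"
  shows "(\<lambda>t. emeasure (K t) {y\<in>space (K t). y j \<le> s}) \<in> borel_measurable (marg L P)"
proof -
  let ?S = "{y\<in>space (PiM M (\<lambda>_. borel :: real measure)). y j \<le> s}"
  have "?S \<in> sets (PiM M (\<lambda>_. borel))"
    using measurable_sets[OF measurable_component_singleton[OF j] atMost_borel, of s]
    by (simp add: vimage_def Int_def conj_commute)
  then have "(\<lambda>t. emeasure (K t) ?S) \<in> borel_measurable (marg L P)"
    by (rule measurable_compose[OF is_rcd_measurable_subprob[OF rcd]
          measurable_emeasure_subprob_algebra])
  moreover have "emeasure (K t) {y\<in>space (K t). y j \<le> s} = emeasure (K t) ?S"
    if "t \<in> space (marg L P)" for t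
    using is_rcd_kernel(3)[OF rcd] that by (simp add: space_marg space_PiM)
  ultimately show ?thesis by (subst measurable_cong) auto
qed

lemma cond_df_measurable:
  assumes "is_rcd L M P K" "j \<in> M"
  shows "(\<lambda>t. cond_df K j t s) \<in> borel_measurable (marg L P)"
  unfolding cond_df_def measure_def
  by (intro borel_measurable_enn2real emeasure_cond_le_measurable[OF assms])

lemma cond_df_nonneg_le_1:
  assumes "is_rcd L M P K" "t \<in> PiE L (\<lambda>_. UNIV)"
  shows "0 \<le> cond_df K j t s" "cond_df K j t s \<le> 1"
proof -
  interpret prob_space "K t" using is_rcd_kernel(1)[OF assms] .
  show "0 \<le> cond_df K j t s" "cond_df K j t s \<le> 1" unfolding cond_df_def by auto
qed

lemma cond_df_right_continuous:
  assumes rcd: "is_rcd L M P K" and t: "t \<in> PiE L (\<lambda>_. UNIV)" and j: "j \<in> M"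
  shows "continuous (at_right s) (cond_df K j t)"
proof -
  interpret K: prob_space "K t" using is_rcd_kernel(1)[OF rcd t] .
  have X: "(\<lambda>y. y j) \<in> measurable (K t) borel"
    using measurable_component_singleton[OF j, of "\<lambda>_. borel :: real measure"]
      is_rcd_kernel(2)[OF rcd t]
    by (simp cong: measurable_cong_sets)
  interpret R: real_distribution "distr (K t) borel (\<lambda>y. y j)"
    using K.real_distribution_distr[OF X] .
  have "cond_df K j t = cdf (distr (K t) borel (\<lambda>y. y j))"
  proof
    fix x
    have "cdf (distr (K t) borel (\<lambda>y. y j)) x = measure (K t) ((\<lambda>y. y j) -` {..x} \<inter> space (K t))"
      unfolding cdf_def2 by (rule measure_distr[OF X]) simp
    also have "(\<lambda>y. y j) -` {..x} \<inter> space (K t) = {y\<in>space (K t). y j \<le> x}" by auto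
    finally show "cond_df K j t x = cdf (distr (K t) borel (\<lambda>y. y j)) x"
      unfolding cond_df_def by simp
  qed
  then show ?thesis using R.cdf_is_right_cont by simp
qed

lemma emeasure_cylinder_is_rcd:
  assumes rcd: "is_rcd L M P K" and fin: "finite (L \<union> M)" and j: "j \<in> M - L"
    and A: "\<And>i. i \<in> L \<Longrightarrow> A i \<in> sets borel"
  shows "emeasure P (PiE (L \<union> M) (\<lambda>i. if i \<in> L then A i else if i = j then {..s} else UNIV)) =
    (\<integral>\<^sup>+t. emeasure (K t) {y\<in>space (K t). y j \<le> s} * indicator (PiE L A) t \<partial>marg L P)"
    (is "emeasure P ?C = _")
proof -
  let ?kernel = "\<lambda>t. distr (K t) (PiM (L \<union> M) (\<lambda>_. borel)) (\<lambda>y. merge L M (t, y))"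
  have C: "?C \<in> sets (PiM (L \<union> M) (\<lambda>_. borel))" using fin A by (intro sets_PiM_I_finite) auto
  have merge: "merge L M \<in> measurable (marg L P \<Otimes>\<^sub>M PiM M (\<lambda>_. borel))
      (PiM (L \<union> M) (\<lambda>_. borel :: real measure))"
    using measurable_merge[of L M "\<lambda>_. borel :: real measure"]
    by (simp add: sets_marg cong: measurable_cong_sets sets_pair_measure_cong)
  have kernel: "?kernel \<in> measurable (marg L P) (subprob_algebra (PiM (L \<union> M) (\<lambda>_. borel)))"
    by (rule measurable_distr2[OF _ is_rcd_measurable_subprob[OF rcd]]) (simp add: merge)
  have "emeasure P ?C = emeasure (bind (marg L P) ?kernel) ?C"
    using rcd unfolding is_rcd_def by simp
  also have "\<dots> = (\<integral>\<^sup>+t. emeasure (?kernel t) ?C \<partial>marg L P)"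
    by (rule emeasure_bind[OF _ kernel C]) (simp add: space_marg PiE_eq_empty_iff)
  also have "\<dots> = (\<integral>\<^sup>+t. emeasure (K t) {y\<in>space (K t). y j \<le> s} * indicator (PiE L A) t \<partial>marg L P)"
  proof (rule nn_integral_cong)
    fix t assume t: "t \<in> space (marg L P)"
    then have t': "t \<in> space (PiM L (\<lambda>_. borel :: real measure))"
      by (simp add: space_marg space_PiM)
    have "(\<lambda>y. merge L M (t, y)) \<in> measurable (PiM M (\<lambda>_. borel)) (PiM (L \<union> M) (\<lambda>_. borel :: real measure))"
      by (rule measurable_Pair2[OF measurable_merge t'])
    then have "emeasure (?kernel t) ?C = emeasure (K t) ((\<lambda>y. merge L M (t, y)) -` ?C \<inter> space (K t))"
      using is_rcd_kernel(2)[OF rcd] t C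
      by (intro emeasure_distr) (auto simp: space_marg cong: measurable_cong_sets)
    also have "(\<lambda>y. merge L M (t, y)) -` ?C \<inter> space (K t) =
        (if t \<in> PiE L A then {y\<in>space (K t). y j \<le> s} else {})"
      using is_rcd_kernel(3)[OF rcd] t j
      by (auto simp: space_marg merge_def PiE_def Pi_def extensional_def split: if_splits)
    finally show "emeasure (?kernel t) ?C = emeasure (K t) {y\<in>space (K t). y j \<le> s} * indicator (PiE L A) t"
      by (simp add: indicator_def)
  qed
  finally show ?thesis .
qed

text \<open>Both \<open>f\<close> and the conditional probability are densities of the measure that gives each
  box \<open>A\<close> the probability of the cylinder over \<open>A\<close>, and densities are unique a.e.\<close>

lemma AE_cond_df_eq_if_cylinder_integrals:
  assumes rcd: "is_rcd L M P K"
    and P: "prob_space P" "sets P = sets (PiM (L \<union> M) (\<lambda>_. borel))"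
    and fin: "finite (L \<union> M)" and j: "j \<in> M - L"
    and f: "f \<in> borel_measurable (PiM L (\<lambda>_. borel))" "\<And>t. 0 \<le> f t"
    and cyl: "\<And>A. (\<And>i. i \<in> L \<Longrightarrow> A i \<in> sets borel) \<Longrightarrow>
      emeasure P (PiE (L \<union> M) (\<lambda>i. if i \<in> L then A i else if i = j then {..s} else UNIV)) =
      (\<integral>\<^sup>+t. ennreal (f t) * indicator (PiE L A) t \<partial>marg L P)"
  shows "AE t in marg L P. cond_df K j t s = f t"
proof -
  let ?h = "\<lambda>t. emeasure (K t) {y\<in>space (K t). y j \<le> s}"
  let ?C = "\<lambda>A. PiE (L \<union> M) (\<lambda>i. if i \<in> L then A i else if i = j then {..s} else UNIV)"
  have finL: "finite L" using fin by simp
  have h: "?h \<in> borel_measurable (marg L P)" using emeasure_cond_le_measurable[OF rcd] j by simp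
  have f': "(\<lambda>t. ennreal (f t)) \<in> borel_measurable (marg L P)"
    using f(1) by (simp add: sets_marg cong: measurable_cong_sets)
  have box: "PiE L A \<in> sets (marg L P)" if "\<And>i. i \<in> L \<Longrightarrow> A i \<in> sets borel" for A
    using that finL by (simp add: sets_marg sets_PiM_I_finite)
  have eq: "emeasure (density (marg L P) ?h) (PiE L A) = emeasure (density (marg L P) f) (PiE L A)"
    if A: "\<And>i. i \<in> L \<Longrightarrow> A i \<in> sets borel" for A
    using emeasure_cylinder_is_rcd[OF rcd fin j A] cyl[OF A]
    by (simp add: emeasure_density[OF h box[OF A]] emeasure_density[OF f' box[OF A]])
  have dens: "density (marg L P) ?h = density (marg L P) f"
  proof (rule measure_eqI_PiM_finite[where I=L and M="\<lambda>_. borel" and A="\<lambda>_. PiE L (\<lambda>_. UNIV)"])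
    show "range (\<lambda>_::nat. PiE L (\<lambda>_. UNIV :: real set)) \<subseteq> prod_algebra L (\<lambda>_. borel)"
      using finL by (auto intro!: prod_algebraI_finite)
    have "emeasure (density (marg L P) ?h) (PiE L (\<lambda>_. UNIV)) = emeasure P (?C (\<lambda>_. UNIV))"
      using emeasure_cylinder_is_rcd[OF rcd fin j, of "\<lambda>_. UNIV"]
      by (simp add: emeasure_density[OF h box])
    also have "\<dots> \<noteq> \<infinity>" using finite_measure.emeasure_finite[OF prob_space.finite_measure[OF P(1)]]
      by simp
    finally show "emeasure (density (marg L P) ?h) (PiE L (\<lambda>_. UNIV)) \<noteq> \<infinity>" .
  qed (use finL eq in \<open>auto simp: sets_marg space_PiM\<close>)
  interpret N: prob_space "marg L P" using prob_space_marg[OF P] by simp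
  have "AE t in marg L P. ?h t = ennreal (f t)" by (rule N.density_unique[OF h f' dens])
  then show ?thesis
    by eventually_elim (simp add: cond_df_def measure_def f(2))
qed

section \<open>The grid patchwork of a copula\<close>

definition grid_ivl :: "nat \<Rightarrow> nat \<Rightarrow> real set" where
  "grid_ivl n b = {real b / n <.. (real b + 1) / n}"

lemma grid_ivl_disjoint:
  assumes "0 < n" "b \<noteq> b'"
  shows "grid_ivl n b \<inter> grid_ivl n b' = {}"
proof (rule ccontr)
  assume "grid_ivl n b \<inter> grid_ivl n b' \<noteq> {}"
  then obtain x where "x \<in> grid_ivl n b" "x \<in> grid_ivl n b'" by blast
  then have "real b < n * x" "n * x \<le> real b + 1" "real b' < n * x" "n * x \<le> real b' + 1"
    using assms(1) by (auto simp: grid_ivl_def field_simps)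
  then have "real b < real b' + 1" "real b' < real b + 1" by linarith+
  then show False using assms(2) by linarith
qed

lemma UN_grid_ivl_lessThan:
  assumes "0 < n"
  shows "(\<Union>b\<in>{..<a}. grid_ivl n b) = {0 <.. real a / n}"
proof (induction a)
  case (Suc a)
  have "0 \<le> real a / n" "real a / n \<le> (real a + 1) / n"
    using assms by (auto simp: divide_right_mono)
  then have "{0<..real a / n} \<union> grid_ivl n a = {0<..(real a + 1) / n}"
    unfolding grid_ivl_def by (rule ivl_disj_un_two(6))
  then show ?case using Suc by (simp add: lessThan_Suc Un_commute add.commute)
qed simp

lemma grid_ivl_subset_unit:
  assumes "0 < n" "b < n"
  shows "grid_ivl n b \<subseteq> {0<..1}"
proof -
  have "real b + 1 \<le> real n" using assms(2) by linarith
  then have "(real b + 1) / n \<le> 1" using assms(1) by (simp add: divide_le_eq)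
  moreover have "0 \<le> real b / n" by simp
  ultimately show ?thesis
    unfolding grid_ivl_def subset_iff greaterThanAtMost_iff by (meson le_less_trans order.trans)
qed

locale grid_patchwork =
  fixes d n :: nat and \<mu> :: "(nat \<Rightarrow> real) measure"
  assumes d_pos: "1 \<le> d" and n_pos: "0 < n" and copula: "copula_on {1..d} \<mu>"
begin

interpretation prob_space \<mu> using copula_onD(1)[OF copula] .

definition grid_cells :: "(nat \<Rightarrow> nat) set" where
  "grid_cells = PiE {1..d} (\<lambda>_. {..<n})"

definition grid_cell :: "(nat \<Rightarrow> nat) \<Rightarrow> (nat \<Rightarrow> real) set" where
  "grid_cell c = PiE {1..d} (\<lambda>i. grid_ivl n (c i))"

definition cell_mass :: "(nat \<Rightarrow> nat) \<Rightarrow> real" where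
  "cell_mass c = measure \<mu> (grid_cell c)"

lemma finite_grid_cells: "finite grid_cells"
  unfolding grid_cells_def by (simp add: finite_PiE)

lemma grid_cells_less: "c \<in> grid_cells \<Longrightarrow> i \<in> {1..d} \<Longrightarrow> c i < n"
  unfolding grid_cells_def by (auto simp: PiE_def Pi_def)

lemma cell_mass_nonneg: "0 \<le> cell_mass c"
  unfolding cell_mass_def by simp

lemma PiE_events: "(\<And>i. i \<in> {1..d} \<Longrightarrow> A i \<in> sets borel) \<Longrightarrow> PiE {1..d} A \<in> events"
  by (rule copula_on_PiE_sets[OF copula]) auto

lemma grid_cell_events: "grid_cell c \<in> events"
  unfolding grid_cell_def grid_ivl_def by (rule PiE_events) auto

lemma AE_in_unit_cube: "AE x in \<mu>. \<forall>i\<in>{1..d}. 0 < x i \<and> x i \<le> 1"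
proof (rule AE_finite_allI)
  fix i assume i: "i \<in> {1..d}"
  have eq: "{x\<in>space \<mu>. 0 < x i \<and> x i \<le> 1} = PiE {1..d} (\<lambda>k. if k = i then {0<..1} else UNIV)"
    using copula_onD(3)[OF copula] i by (auto simp: PiE_def Pi_def)
  have "{x\<in>space \<mu>. 0 < x i \<and> x i \<le> 1} \<in> events"
    unfolding eq by (rule PiE_events) auto
  moreover have "prob {x\<in>space \<mu>. 0 < x i \<and> x i \<le> 1} = 1"
    using copula_on_slab[OF copula _ i, of 0 1] by simp
  ultimately have "AE x in \<mu>. x \<in> {x\<in>space \<mu>. 0 < x i \<and> x i \<le> 1}"
    by (intro AE_prob_1)
  then show "AE x in \<mu>. 0 < x i \<and> x i \<le> 1" by eventually_elim auto
qed simp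

lemma measure_PiE_Int_unit:
  assumes "\<And>i. i \<in> {1..d} \<Longrightarrow> A i \<in> sets borel"
  shows "prob (PiE {1..d} (\<lambda>i. A i \<inter> {0<..1})) = prob (PiE {1..d} A)"
proof (rule measure_eq_AE)
  show "AE x in \<mu>. (x \<in> PiE {1..d} (\<lambda>i. A i \<inter> {0<..1})) = (x \<in> PiE {1..d} A)"
    using AE_in_unit_cube by eventually_elim (auto simp: PiE_def Pi_def)
  show "PiE {1..d} (\<lambda>i. A i \<inter> {0<..1}) \<in> events" by (rule PiE_events) (use assms in auto)
  show "PiE {1..d} A \<in> events" by (rule PiE_events) (use assms in auto)
qed

lemma measure_PiE_UN_grid_ivl:
  assumes R: "\<And>i. i \<in> {1..d} \<Longrightarrow> R i \<subseteq> {..<n}"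
  shows "prob (PiE {1..d} (\<lambda>i. \<Union>b\<in>R i. grid_ivl n b)) = (\<Sum>c\<in>PiE {1..d} R. cell_mass c)"
proof -
  have fin: "finite (PiE {1..d} R)"
    using R by (intro finite_PiE) (auto intro: finite_subset)
  have disj: "disjoint_family_on grid_cell (PiE {1..d} R)"
    unfolding disjoint_family_on_def
  proof (intro ballI impI)
    fix c c' assume c: "c \<in> PiE {1..d} R" and c': "c' \<in> PiE {1..d} R" and "c \<noteq> c'"
    then obtain i where i: "i \<in> {1..d}" "c i \<noteq> c' i" using PiE_ext[OF c c'] by blast
    then have "grid_ivl n (c i) \<inter> grid_ivl n (c' i) = {}" by (intro grid_ivl_disjoint n_pos)
    then show "grid_cell c \<inter> grid_cell c' = {}"
      unfolding grid_cell_def using i(1) by (auto simp: PiE_def Pi_def)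
  qed
  have "prob (PiE {1..d} (\<lambda>i. \<Union>b\<in>R i. grid_ivl n b)) = prob (\<Union>c\<in>PiE {1..d} R. grid_cell c)"
    unfolding grid_cell_def PiE_UN_distrib ..
  also have "\<dots> = (\<Sum>c\<in>PiE {1..d} R. cell_mass c)"
    unfolding cell_mass_def using fin disj grid_cell_events
    by (intro finite_measure_finite_Union) auto
  finally show ?thesis .
qed

lemma sum_cell_mass: "(\<Sum>c\<in>grid_cells. cell_mass c) = 1"
proof -
  have "(\<Sum>c\<in>grid_cells. cell_mass c) = prob (PiE {1..d} (\<lambda>i. \<Union>b\<in>{..<n}. grid_ivl n b))"
    unfolding grid_cells_def by (rule measure_PiE_UN_grid_ivl[symmetric]) auto
  also have "\<dots> = prob (PiE {1..d} (\<lambda>i. UNIV \<inter> {0<..1}))"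
    using UN_grid_ivl_lessThan[OF n_pos, of n] n_pos by simp
  also have "\<dots> = prob (PiE {1..d} (\<lambda>i. UNIV))" by (rule measure_PiE_Int_unit) auto
  also have "\<dots> = 1" using copula_onD(3)[OF copula] prob_space by simp
  finally show ?thesis .
qed

lemma sum_cell_mass_slab:
  assumes i: "i \<in> {1..d}" and a: "a < n"
  shows "(\<Sum>c\<in>{c\<in>grid_cells. c i = a}. cell_mass c) = 1 / n"
proof -
  let ?R = "\<lambda>k. if k = i then {a} else {..<n}"
  have eq: "{c\<in>grid_cells. c i = a} = PiE {1..d} ?R"
    unfolding grid_cells_def using i a by (auto simp: PiE_def Pi_def)
  have "(\<Sum>c\<in>{c\<in>grid_cells. c i = a}. cell_mass c) = prob (PiE {1..d} (\<lambda>k. \<Union>b\<in>?R k. grid_ivl n b))"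
    unfolding eq using a by (intro measure_PiE_UN_grid_ivl[symmetric]) auto
  also have "PiE {1..d} (\<lambda>k. \<Union>b\<in>?R k. grid_ivl n b)
      = PiE {1..d} (\<lambda>k. (if k = i then grid_ivl n a else UNIV) \<inter> {0<..1})"
    using grid_ivl_subset_unit[OF n_pos a] UN_grid_ivl_lessThan[OF n_pos, of n] n_pos
    by (intro PiE_cong) auto
  also have "prob \<dots> = prob (PiE {1..d} (\<lambda>k. if k = i then grid_ivl n a else UNIV))"
    by (rule measure_PiE_Int_unit) (auto simp: grid_ivl_def)
  also have "PiE {1..d} (\<lambda>k. if k = i then grid_ivl n a else UNIV)
     = {x\<in>space \<mu>. real a / n < x i \<and> x i \<le> (real a + 1) / n}"
    using i copula_onD(3)[OF copula] unfolding grid_ivl_def by (auto simp: PiE_def Pi_def)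
  also have "prob \<dots> = (real a + 1) / n - real a / n"
    using a n_pos i by (intro copula_on_slab[OF copula]) (auto simp: field_simps)
  also have "\<dots> = 1 / n" by (simp add: diff_divide_distrib[symmetric])
  finally show ?thesis .
qed

lemma cdf_on_grid_point:
  assumes a: "\<And>i. i \<in> {1..d} \<Longrightarrow> a i \<le> n"
  shows "cdf_on {1..d} \<mu> (\<lambda>i. real (a i) / n) =
    (\<Sum>c\<in>{c\<in>grid_cells. \<forall>i\<in>{1..d}. c i < a i}. cell_mass c)"
proof -
  have eq: "{c\<in>grid_cells. \<forall>i\<in>{1..d}. c i < a i} = PiE {1..d} (\<lambda>i. {..<a i})"
    unfolding grid_cells_def using a by (auto simp: PiE_def Pi_def less_le_trans)
  have "(\<Sum>c\<in>{c\<in>grid_cells. \<forall>i\<in>{1..d}. c i < a i}. cell_mass c)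
      = prob (PiE {1..d} (\<lambda>i. \<Union>b\<in>{..<a i}. grid_ivl n b))"
    unfolding eq using a by (intro measure_PiE_UN_grid_ivl[symmetric]) (auto simp: less_le_trans)
  also have "PiE {1..d} (\<lambda>i. \<Union>b\<in>{..<a i}. grid_ivl n b) = PiE {1..d} (\<lambda>i. {..real (a i) / n} \<inter> {0<..1})"
  proof (intro PiE_cong)
    fix i assume i: "i \<in> {1..d}"
    have "real (a i) / n \<le> 1" using a[OF i] n_pos by (simp add: field_simps)
    then show "(\<Union>b\<in>{..<a i}. grid_ivl n b) = {..real (a i) / n} \<inter> {0<..1}"
      using UN_grid_ivl_lessThan[OF n_pos, of "a i"] by auto
  qed
  also have "prob \<dots> = prob (PiE {1..d} (\<lambda>i. {..real (a i) / n}))"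
    by (rule measure_PiE_Int_unit) auto
  also have "PiE {1..d} (\<lambda>i. {..real (a i) / n}) = {x\<in>space \<mu>. \<forall>i\<in>{1..d}. x i \<le> real (a i) / n}"
    using copula_onD(3)[OF copula] by (auto simp: PiE_def Pi_def)
  finally show ?thesis unfolding cdf_on_def by simp
qed

text \<open>Within the grid interval of \<open>c i\<close>, the slots of the cells sharing that interval are laid
  end to end in the order given by \<open>cell_index\<close>; they fit because such cells have total
  mass \<open>1/n\<close>.\<close>

definition cell_index :: "(nat \<Rightarrow> nat) \<Rightarrow> nat" where
  "cell_index = to_nat_on grid_cells"

definition slot_start :: "nat \<Rightarrow> (nat \<Rightarrow> nat) \<Rightarrow> real" where
  "slot_start i c = real (c i) / n +
     (\<Sum>c'\<in>{c'\<in>grid_cells. c' i = c i \<and> cell_index c' < cell_index c}. cell_mass c')"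

definition slot :: "(nat \<Rightarrow> nat) \<Rightarrow> nat \<Rightarrow> real set" where
  "slot c i = {slot_start i c <.. slot_start i c + cell_mass c}"

lemma slot_borel [measurable]: "slot c i \<in> sets borel"
  unfolding slot_def by simp

lemma measure_slot: "measure lborel (slot c i) = cell_mass c"
  unfolding slot_def using cell_mass_nonneg[of c] by simp

lemma slot_empty: "cell_mass c = 0 \<Longrightarrow> slot c i = {}"
  unfolding slot_def by simp

lemma slot_start_lower: "real (c i) / n \<le> slot_start i c"
  unfolding slot_start_def by (intro add_increasing2 sum_nonneg cell_mass_nonneg) auto

lemma slot_end_le_sum_slab:
  assumes c: "c \<in> grid_cells" and T: "finite T"
    "{c'\<in>grid_cells. c' i = c i \<and> cell_index c' \<le> cell_index c} \<subseteq> T"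
  shows "slot_start i c + cell_mass c \<le> real (c i) / n + sum cell_mass T"
proof -
  let ?S = "{c'\<in>grid_cells. c' i = c i \<and> cell_index c' < cell_index c}"
  have "cell_mass c + sum cell_mass ?S = sum cell_mass (insert c ?S)"
    using finite_grid_cells by (subst sum.insert) auto
  also have "\<dots> \<le> sum cell_mass T"
    using c T by (intro sum_mono2 cell_mass_nonneg) auto
  finally show ?thesis unfolding slot_start_def by simp
qed

lemma slot_subset_grid_ivl:
  assumes c: "c \<in> grid_cells" and i: "i \<in> {1..d}"
  shows "slot c i \<subseteq> grid_ivl n (c i)"
proof -
  have "slot_start i c + cell_mass c \<le> real (c i) / n + 1 / n"
    using slot_end_le_sum_slab[OF c, of "{c'\<in>grid_cells. c' i = c i}" i] finite_grid_cells
      sum_cell_mass_slab[OF i grid_cells_less[OF c i]]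
    by auto
  then show ?thesis
    using slot_start_lower[of c i] unfolding slot_def grid_ivl_def
      by (auto simp: add_divide_distrib)
qed

lemma slot_subset_unit: "c \<in> grid_cells \<Longrightarrow> i \<in> {1..d} \<Longrightarrow> slot c i \<subseteq> {0<..1}"
  using slot_subset_grid_ivl grid_ivl_subset_unit[OF n_pos grid_cells_less] by blast

lemma slot_disjoint:
  assumes c: "c \<in> grid_cells" and c': "c' \<in> grid_cells" and "c \<noteq> c'" and i: "i \<in> {1..d}"
  shows "slot c i \<inter> slot c' i = {}"
proof (cases "c i = c' i")
  case False
  then show ?thesis
    using slot_subset_grid_ivl[OF c i] slot_subset_grid_ivl[OF c' i] grid_ivl_disjoint[OF n_pos]
    by blast
next
  case True
  have before: "slot_start i a + cell_mass a \<le> slot_start i b"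
    if a: "a \<in> grid_cells" and b: "b \<in> grid_cells" "a i = b i" "cell_index a < cell_index b" for a b
  proof -
    let ?T = "{c'\<in>grid_cells. c' i = b i \<and> cell_index c' < cell_index b}"
    have "slot_start i a + cell_mass a \<le> real (a i) / n + sum cell_mass ?T"
      by (rule slot_end_le_sum_slab[OF a]) (use b finite_grid_cells in auto)
    then show ?thesis unfolding slot_start_def[of i b] using b(2) by simp
  qed
  have "cell_index c \<noteq> cell_index c'"
    using inj_on_to_nat_on[OF countable_finite[OF finite_grid_cells]] c c' \<open>c \<noteq> c'\<close>
    unfolding cell_index_def by (auto dest: inj_onD)
  then consider "cell_index c < cell_index c'" | "cell_index c' < cell_index c" by linarith
  then show ?thesis
    using before[OF c c'] before[OF c' c] True unfolding slot_def by cases auto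
qed

lemma sum_measure_slot_Int_atMost:
  assumes i: "i \<in> {1..d}" and s: "0 \<le> s" "s \<le> 1"
  shows "(\<Sum>c\<in>grid_cells. measure lborel (slot c i \<inter> {..s})) = s"
proof (rule sum_measure_Int_atMost_eq[OF finite_grid_cells _ _ _ _ s])
  show "disjoint_family_on (\<lambda>c. slot c i) grid_cells"
    unfolding disjoint_family_on_def using slot_disjoint[OF _ _ _ i] by blast
  show "(\<Sum>c\<in>grid_cells. measure lborel (slot c i)) = 1"
    unfolding measure_slot by (rule sum_cell_mass)
qed (use slot_subset_unit[OF _ i] in auto)


text \<open>The density is \<open>cell_mass c / cell_mass c ^ d\<close> on the cube with sides \<open>slot c i\<close>, which
  therefore carries the mass \<open>cell_mass c\<close> of the grid cell \<open>c\<close>. Cells of mass 0 have empty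
  slots, so the division by zero in that case is harmless.\<close>

definition patch_density :: "(nat \<Rightarrow> real) \<Rightarrow> real" where
  "patch_density x = (\<Sum>c\<in>grid_cells. indicator (PiE {1..d} (slot c)) x / cell_mass c ^ (d - 1))"

definition patchwork :: "(nat \<Rightarrow> real) measure" where
  "patchwork = density (PiM {1..d} (\<lambda>_. lborel)) (\<lambda>x. ennreal (patch_density x))"

definition cell_box_mass :: "(nat \<Rightarrow> nat) \<Rightarrow> (nat \<Rightarrow> real set) \<Rightarrow> real" where
  "cell_box_mass c A = (\<Prod>i\<in>{1..d}. measure lborel (slot c i \<inter> A i)) / cell_mass c ^ (d - 1)"

lemma sets_patchwork: "sets patchwork = sets (PiM {1..d} (\<lambda>_. borel))"
  unfolding patchwork_def sets_density by (intro sets_PiM_cong) auto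

lemma space_patchwork: "space patchwork = PiE {1..d} (\<lambda>_. UNIV)"
  unfolding patchwork_def by (simp add: space_PiM)

lemma cell_box_mass_nonneg: "0 \<le> cell_box_mass c A"
  unfolding cell_box_mass_def
    by (intro divide_nonneg_nonneg prod_nonneg zero_le_power cell_mass_nonneg) auto

lemma cell_box_mass_cong:
  "(\<And>i. i \<in> {1..d} \<Longrightarrow> slot c i \<inter> A i = slot c i \<inter> B i) \<Longrightarrow> cell_box_mass c A = cell_box_mass c B"
  unfolding cell_box_mass_def by (metis (no_types, lifting) prod.cong)

lemma cell_box_mass_eq_0:
  assumes "i \<in> {1..d}" "slot c i \<inter> A i = {}"
  shows "cell_box_mass c A = 0"
proof -
  have "(\<Prod>i\<in>{1..d}. measure lborel (slot c i \<inter> A i)) = 0"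
    using assms by (intro prod_zero bexI[of _ i]) auto
  then show ?thesis unfolding cell_box_mass_def by simp
qed

lemma patch_density_nonneg: "0 \<le> patch_density x"
  unfolding patch_density_def
  by (intro sum_nonneg divide_nonneg_nonneg zero_le_power cell_mass_nonneg) auto

lemma emeasure_slot_Int: "emeasure lborel (slot c i \<inter> A) = ennreal (measure lborel (slot c i \<inter> A))"
proof (rule emeasure_eq_ennreal_measure)
  have "emeasure lborel (slot c i \<inter> A) \<le> emeasure lborel (slot c i)"
    by (rule emeasure_mono) auto
  also have "\<dots> = ennreal (cell_mass c)" unfolding slot_def using cell_mass_nonneg[of c] by simp
  finally show "emeasure lborel (slot c i \<inter> A) \<noteq> top" by (auto simp: top_unique)
qed

lemma emeasure_patchwork_PiE:
  assumes A: "\<And>i. i \<in> {1..d} \<Longrightarrow> A i \<in> sets borel"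
  shows "emeasure patchwork (PiE {1..d} A) = ennreal (\<Sum>c\<in>grid_cells. cell_box_mass c A)"
proof -
  interpret L: product_sigma_finite "\<lambda>_::nat. lborel :: real measure" by standard
  let ?lam = "PiM {1..d} (\<lambda>_. lborel :: real measure)"
  let ?S = "PiE {1..d} A"
  have S: "?S \<in> sets ?lam" using A by (intro sets_PiM_I_finite) auto
  have "emeasure patchwork ?S = (\<integral>\<^sup>+x. ennreal (patch_density x) * indicator ?S x \<partial>?lam)"
    unfolding patchwork_def using S by (intro emeasure_density) (auto simp: patch_density_def)
  also have "\<dots> = (\<integral>\<^sup>+x. ennreal (\<Sum>c\<in>grid_cells. 1 / cell_mass c ^ (d - 1) *
      indicator (PiE {1..d} (\<lambda>i. slot c i \<inter> A i)) x) \<partial>?lam)"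
  proof (rule nn_integral_cong)
    fix x
    have "ennreal (patch_density x) * indicator ?S x = ennreal (patch_density x * indicator ?S x)"
      using patch_density_nonneg by (simp add: ennreal_mult' ennreal_indicator[symmetric])
    also have "patch_density x * indicator ?S x = (\<Sum>c\<in>grid_cells. 1 / cell_mass c ^ (d - 1) *
        indicator (PiE {1..d} (\<lambda>i. slot c i \<inter> A i)) x)"
      unfolding patch_density_def sum_distrib_right
      by (intro sum.cong) (auto simp: indicator_def PiE_def Pi_def)
    finally show "ennreal (patch_density x) * indicator ?S x = ennreal (\<Sum>c\<in>grid_cells.
        1 / cell_mass c ^ (d - 1) * indicator (PiE {1..d} (\<lambda>i. slot c i \<inter> A i)) x)" .
  qed
  also have "\<dots> = (\<Sum>c\<in>grid_cells. ennreal (1 / cell_mass c ^ (d - 1)) *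
      emeasure ?lam (PiE {1..d} (\<lambda>i. slot c i \<inter> A i)))"
    using A by (intro nn_integral_sum_mult_indicator finite_grid_cells sets_PiM_I_finite)
      (auto intro!: divide_nonneg_nonneg zero_le_power cell_mass_nonneg)
  also have "\<dots> = (\<Sum>c\<in>grid_cells. ennreal (cell_box_mass c A))"
  proof (rule sum.cong[OF refl])
    fix c
    have "emeasure ?lam (PiE {1..d} (\<lambda>i. slot c i \<inter> A i)) =
        (\<Prod>i\<in>{1..d}. emeasure lborel (slot c i \<inter> A i))"
      using A by (intro L.emeasure_PiM) auto
    also have "\<dots> = (\<Prod>i\<in>{1..d}. ennreal (measure lborel (slot c i \<inter> A i)))"
      by (intro prod.cong refl emeasure_slot_Int)
    finally show "ennreal (1 / cell_mass c ^ (d - 1)) * emeasure ?lam (PiE {1..d} (\<lambda>i. slot c i \<inter> A i))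
        = ennreal (cell_box_mass c A)"
      unfolding cell_box_mass_def
      by (simp add: prod_ennreal ennreal_mult'[symmetric] cell_mass_nonneg prod_nonneg)
  qed
  also have "\<dots> = ennreal (\<Sum>c\<in>grid_cells. cell_box_mass c A)"
    by (rule sum_ennreal) (rule cell_box_mass_nonneg)
  finally show ?thesis .
qed

lemma measure_slot_Int_div_mult:
  "measure lborel (slot c i \<inter> B) / cell_mass c * cell_mass c = measure lborel (slot c i \<inter> B)"
  by (cases "cell_mass c = 0") (simp_all add: slot_empty)

lemma cell_box_mass_fun_upd:
  assumes j: "j \<in> {1..d}"
  shows "cell_box_mass c (A(j := B)) =
    measure lborel (slot c j \<inter> B) / cell_mass c * cell_box_mass c (A(j := UNIV))"
proof -
  let ?W = "cell_mass c ^ (d - 1)"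
  let ?P = "\<Prod>i\<in>{1..d} - {j}. measure lborel (slot c i \<inter> A i)"
  have split: "cell_box_mass c (A(j := X)) = measure lborel (slot c j \<inter> X) * ?P / ?W" for X
  proof -
    have "(\<Prod>i\<in>{1..d}. measure lborel (slot c i \<inter> (A(j := X)) i)) =
        measure lborel (slot c j \<inter> X) * (\<Prod>i\<in>{1..d} - {j}. measure lborel (slot c i \<inter> (A(j := X)) i))"
      using j by (subst prod.remove) auto
    also have "(\<Prod>i\<in>{1..d} - {j}. measure lborel (slot c i \<inter> (A(j := X)) i)) = ?P"
      by (intro prod.cong) auto
    finally show ?thesis unfolding cell_box_mass_def by simp
  qed
  have "measure lborel (slot c j \<inter> B) / cell_mass c * cell_box_mass c (A(j := UNIV)) =
      (measure lborel (slot c j \<inter> B) / cell_mass c * cell_mass c) * ?P / ?W"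
    using split[of UNIV] by (simp add: measure_slot)
  also have "\<dots> = cell_box_mass c (A(j := B))"
    unfolding measure_slot_Int_div_mult split ..
  finally show ?thesis ..
qed

lemma cell_box_mass_UNIV: "cell_box_mass c (\<lambda>_. UNIV) = cell_mass c"
proof -
  have "cell_mass c ^ d = cell_mass c * cell_mass c ^ (d - 1)"
    using d_pos by (simp add: power_eq_if)
  then show ?thesis
    unfolding cell_box_mass_def by (cases "cell_mass c = 0") (simp_all add: measure_slot)
qed

lemma cell_box_mass_prod:
  assumes "finite M" "M \<subseteq> {1..d}"
  shows "cell_box_mass c (\<lambda>i. if i \<in> M then B i else A i) =
    (\<Prod>j\<in>M. measure lborel (slot c j \<inter> B j) / cell_mass c) *
    cell_box_mass c (\<lambda>i. if i \<in> M then UNIV else A i)"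
  using assms
proof (induction M arbitrary: A rule: finite_induct)
  case (insert j M)
  have j: "j \<in> {1..d}" and M: "M \<subseteq> {1..d}" using insert.prems by auto
  have "(\<lambda>i. if i \<in> insert j M then B i else A i) = (\<lambda>i. if i \<in> M then B i else (A(j := B j)) i)"
    using insert.hyps(2) by (auto simp: fun_eq_iff)
  moreover have "(\<lambda>i. if i \<in> M then UNIV else (A(j := B j)) i) =
      (\<lambda>i. if i \<in> M then UNIV else A i)(j := B j)"
    using insert.hyps(2) by (auto simp: fun_eq_iff)
  moreover have "(\<lambda>i. if i \<in> M then UNIV else A i)(j := UNIV) =
      (\<lambda>i. if i \<in> insert j M then UNIV else A i)"
    by (auto simp: fun_eq_iff)
  ultimately show ?case
    using insert.IH[OF M, of "A(j := B j)"] cell_box_mass_fun_upd[OF j] insert.hyps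
    by (simp add: mult.assoc)
qed simp

lemma sum_cell_box_mass_single:
  assumes c: "c \<in> grid_cells" and l: "l \<in> {1..d}" and A: "A l \<subseteq> slot c l"
  shows "(\<Sum>c'\<in>grid_cells. cell_box_mass c' A) = cell_box_mass c A"
proof -
  have "(\<Sum>c'\<in>grid_cells. cell_box_mass c' A) =
      cell_box_mass c A + (\<Sum>c'\<in>grid_cells - {c}. cell_box_mass c' A)"
    using c finite_grid_cells by (subst sum.remove) auto
  also have "(\<Sum>c'\<in>grid_cells - {c}. cell_box_mass c' A) = 0"
  proof (rule sum.neutral, rule ballI)
    fix c' assume c': "c' \<in> grid_cells - {c}"
    show "cell_box_mass c' A = 0"
    proof (rule cell_box_mass_eq_0[OF l])
      show "slot c' l \<inter> A l = {}" using slot_disjoint[of c' c l] c' c l A by blast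
    qed
  qed
  finally show ?thesis by simp
qed

lemma emeasure_patchwork_le:
  assumes i: "i \<in> {1..d}"
  shows "emeasure patchwork {x\<in>space patchwork. x i \<le> s} =
    ennreal (\<Sum>c\<in>grid_cells. measure lborel (slot c i \<inter> {..s}))"
proof -
  let ?A = "(\<lambda>_. UNIV)(i := {..s})"
  have "{x\<in>space patchwork. x i \<le> s} = PiE {1..d} (\<lambda>k. if k = i then {..s} else UNIV)"
    using space_patchwork i by (auto simp: PiE_def Pi_def)
  also have "(\<lambda>k. if k = i then {..s} else UNIV) = ?A" by (rule ext) simp
  finally have eq: "{x\<in>space patchwork. x i \<le> s} = PiE {1..d} ?A" .
  have UNIV: "(\<lambda>_::nat. UNIV :: real set)(i := UNIV) = (\<lambda>_. UNIV)" by (rule ext) simp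
  have "cell_box_mass c ?A = measure lborel (slot c i \<inter> {..s})" for c
    using cell_box_mass_fun_upd[OF i, of c "\<lambda>_. UNIV" "{..s}"]
    unfolding UNIV cell_box_mass_UNIV measure_slot_Int_div_mult by simp
  moreover have "emeasure patchwork (PiE {1..d} ?A) = ennreal (\<Sum>c\<in>grid_cells. cell_box_mass c ?A)"
    by (rule emeasure_patchwork_PiE) simp
  ultimately show ?thesis unfolding eq by simp
qed

lemma copula_on_patchwork: "copula_on {1..d} patchwork"
  unfolding copula_on_def
proof (intro conjI ballI)
  have "emeasure patchwork (PiE {1..d} (\<lambda>_. UNIV)) = 1"
    using emeasure_patchwork_PiE[of "\<lambda>_. UNIV"] by (simp add: cell_box_mass_UNIV sum_cell_mass)
  then show "prob_space patchwork" by (intro prob_spaceI) (simp add: space_patchwork)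
  show "sets patchwork = sets (PiM {1..d} (\<lambda>_. borel))" by (rule sets_patchwork)
  fix i s assume "i \<in> {1..d}" "s \<in> {0..1::real}"
  then show "measure patchwork {x\<in>space patchwork. x i \<le> s} = s"
    by (intro measure_eq_emeasure_eq_ennreal)
       (auto simp: emeasure_patchwork_le sum_measure_slot_Int_atMost)
qed

lemma cell_box_mass_grid_point:
  assumes c: "c \<in> grid_cells"
  shows "cell_box_mass c (\<lambda>i. {..real (a i) / n}) =
    (if \<forall>i\<in>{1..d}. c i < a i then cell_mass c else 0)"
proof (cases "\<forall>i\<in>{1..d}. c i < a i")
  case True
  have "slot c i \<subseteq> {..real (a i) / n}" if i: "i \<in> {1..d}" for i
  proof -
    have "c i < a i" using True i by blast
    then have "real (Suc (c i)) \<le> real (a i)" by (simp only: of_nat_le_iff Suc_le_eq)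
    then have "(real (c i) + 1) / n \<le> real (a i) / n" by (simp add: divide_right_mono)
    then show ?thesis using slot_subset_grid_ivl[OF c i] unfolding grid_ivl_def by auto
  qed
  then have "cell_box_mass c (\<lambda>i. {..real (a i) / n}) = cell_box_mass c (\<lambda>_. UNIV)"
    by (intro cell_box_mass_cong) auto
  then show ?thesis using True by (simp add: cell_box_mass_UNIV)
next
  case False
  then obtain i where i: "i \<in> {1..d}" "a i \<le> c i" by auto
  then have "real (a i) / n \<le> real (c i) / n" by (simp add: divide_right_mono)
  then have "slot c i \<inter> {..real (a i) / n} = {}"
    using slot_subset_grid_ivl[OF c i(1)] unfolding grid_ivl_def by auto
  then have "cell_box_mass c (\<lambda>i. {..real (a i) / n}) = 0"
    by (intro cell_box_mass_eq_0[OF i(1)])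
  then show ?thesis unfolding if_not_P[OF False] .
qed

lemma cdf_on_patchwork_grid_point:
  "cdf_on {1..d} patchwork (\<lambda>i. real (a i) / n) =
    (\<Sum>c\<in>{c\<in>grid_cells. \<forall>i\<in>{1..d}. c i < a i}. cell_mass c)"
proof -
  have box: "{x\<in>space patchwork. \<forall>i\<in>{1..d}. x i \<le> real (a i) / n} = PiE {1..d} (\<lambda>i. {..real (a i) / n})"
    using space_patchwork by (auto simp: PiE_def Pi_def)
  have "emeasure patchwork (PiE {1..d} (\<lambda>i. {..real (a i) / n})) =
      ennreal (\<Sum>c\<in>grid_cells. if \<forall>i\<in>{1..d}. c i < a i then cell_mass c else 0)"
    using emeasure_patchwork_PiE[of "\<lambda>i. {..real (a i) / n}"]
    by (simp add: cell_box_mass_grid_point cong: sum.cong)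
  also have "\<dots> = ennreal (\<Sum>c\<in>{c\<in>grid_cells. \<forall>i\<in>{1..d}. c i < a i}. cell_mass c)"
    using finite_grid_cells by (simp add: sum.inter_filter)
  finally show ?thesis unfolding cdf_on_def box
    by (intro measure_eq_emeasure_eq_ennreal) (auto intro: sum_nonneg cell_mass_nonneg)
qed

lemma copula_dist_patchwork: "copula_dist d \<mu> patchwork \<le> real d / n"
proof (rule copula_dist_le_if_eq_on_grid[OF copula copula_on_patchwork n_pos])
  fix a assume a: "\<And>i. i \<in> {1..d} \<Longrightarrow> a i \<le> n"
  show "cdf_on {1..d} \<mu> (\<lambda>i. real (a i) / n) = cdf_on {1..d} patchwork (\<lambda>i. real (a i) / n)"
    using cdf_on_grid_point[OF a] cdf_on_patchwork_grid_point by simp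
qed


section \<open>Conditional distributions of the patchwork\<close>

definition slot_df :: "(nat \<Rightarrow> nat) \<Rightarrow> nat \<Rightarrow> real \<Rightarrow> real" where
  "slot_df c j s = measure lborel (slot c j \<inter> {..s}) / cell_mass c"

text \<open>Given that the coordinates in \<open>L\<close> lie in the slots of the cell \<open>c\<close>, the other coordinates
  of the patchwork are independent and uniform on their slots; \<open>patch_cond_df\<close> is the resulting
  conditional distribution function.\<close>

definition patch_cond_df :: "nat set \<Rightarrow> nat \<Rightarrow> (nat \<Rightarrow> real) \<Rightarrow> real \<Rightarrow> real" where
  "patch_cond_df L j t s = (\<Sum>c\<in>grid_cells. indicator (PiE L (slot c)) t * slot_df c j s)"

lemma slot_df_nonneg: "0 \<le> slot_df c j s"
  unfolding slot_df_def using cell_mass_nonneg[of c] by simp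

lemma patch_cond_df_nonneg: "0 \<le> patch_cond_df L j t s"
  unfolding patch_cond_df_def by (intro sum_nonneg mult_nonneg_nonneg slot_df_nonneg) auto

lemma continuous_slot_df: "continuous_on UNIV (slot_df c j)"
proof -
  have "slot_df c j =
      (\<lambda>s. max 0 (min (slot_start j c + cell_mass c) s - slot_start j c) * inverse (cell_mass c))"
    unfolding slot_df_def slot_def using cell_mass_nonneg[of c]
    by (simp add: fun_eq_iff measure_Ioc_Int_atMost divide_inverse)
  moreover have "continuous_on UNIV
      (\<lambda>s. max 0 (min (slot_start j c + cell_mass c) s - slot_start j c) * inverse (cell_mass c))"
    by (intro continuous_intros)
  ultimately show ?thesis by simp
qed

lemma slot_boxes_disjoint:
  assumes "L \<subseteq> {1..d}" "L \<noteq> {}" "c \<in> grid_cells" "c' \<in> grid_cells" "c \<noteq> c'"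
  shows "PiE L (slot c) \<inter> PiE L (slot c') = {}"
proof -
  obtain l where l: "l \<in> L" using assms(2) by auto
  then have "slot c l \<inter> slot c' l = {}" using assms by (intro slot_disjoint) auto
  then show ?thesis using l by (auto simp: PiE_def Pi_def)
qed

lemma sum_indicator_slot_boxes:
  fixes f :: "(nat \<Rightarrow> nat) \<Rightarrow> real"
  assumes L: "L \<subseteq> {1..d}" "L \<noteq> {}" and c: "c \<in> grid_cells" and t: "t \<in> PiE L (slot c)"
  shows "(\<Sum>c'\<in>grid_cells. indicator (PiE L (slot c')) t * f c') = f c"
proof -
  have "(\<Sum>c'\<in>grid_cells. indicator (PiE L (slot c')) t * f c') = indicator (PiE L (slot c)) t * f c +
      (\<Sum>c'\<in>grid_cells - {c}. indicator (PiE L (slot c')) t * f c')"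
    using c finite_grid_cells by (subst sum.remove) auto
  also have "(\<Sum>c'\<in>grid_cells - {c}. indicator (PiE L (slot c')) t * f c') = 0"
    using slot_boxes_disjoint[OF L c] t by (intro sum.neutral) (auto simp: indicator_def)
  finally show ?thesis using t by simp
qed

lemma patch_cond_df_eq_slot_df:
  "L \<subseteq> {1..d} \<Longrightarrow> L \<noteq> {} \<Longrightarrow> c \<in> grid_cells \<Longrightarrow> t \<in> PiE L (slot c) \<Longrightarrow>
    patch_cond_df L j t s = slot_df c j s"
  unfolding patch_cond_df_def by (rule sum_indicator_slot_boxes)

lemma prod_patch_cond_df:
  assumes L: "L \<subseteq> {1..d}" "L \<noteq> {}" and M: "finite M" "M \<noteq> {}"
  shows "(\<Prod>j\<in>M. patch_cond_df L j t (u j)) =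
    (\<Sum>c\<in>grid_cells. indicator (PiE L (slot c)) t * (\<Prod>j\<in>M. slot_df c j (u j)))"
proof (cases "\<exists>c\<in>grid_cells. t \<in> PiE L (slot c)")
  case True
  then obtain c where c: "c \<in> grid_cells" "t \<in> PiE L (slot c)" by blast
  then show ?thesis
    by (simp add: sum_indicator_slot_boxes[OF L] patch_cond_df_eq_slot_df[OF L])
next
  case False
  obtain j where j: "j \<in> M" using M(2) by blast
  have "patch_cond_df L j t (u j) = 0"
    unfolding patch_cond_df_def using False by (intro sum.neutral) auto
  then have "(\<Prod>j\<in>M. patch_cond_df L j t (u j)) = 0"
    using j M(1) by (intro prod_zero bexI[of _ j]) auto
  moreover have "(\<Sum>c\<in>grid_cells. indicator (PiE L (slot c)) t * (\<Prod>j\<in>M. slot_df c j (u j))) = 0"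
    using False by (intro sum.neutral) auto
  ultimately show ?thesis by simp
qed

lemma emeasure_marg_patchwork_PiE:
  assumes S: "S \<subseteq> {1..d}" and A: "\<And>i. i \<in> S \<Longrightarrow> A i \<in> sets borel"
  shows "emeasure (marg S patchwork) (PiE S A) =
    ennreal (\<Sum>c\<in>grid_cells. cell_box_mass c (\<lambda>i. if i \<in> S then A i else UNIV))"
proof -
  have "emeasure (marg S patchwork) (PiE S A) =
      emeasure patchwork (PiE {1..d} (\<lambda>i. if i \<in> S then A i else UNIV))"
    by (rule emeasure_marg_PiE[OF sets_patchwork S]) (use A S in \<open>auto intro: finite_subset\<close>)
  also have "\<dots> = ennreal (\<Sum>c\<in>grid_cells. cell_box_mass c (\<lambda>i. if i \<in> S then A i else UNIV))"
    by (rule emeasure_patchwork_PiE) (use A in auto)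
  finally show ?thesis .
qed

lemma emeasure_marg_patchwork_slot_box:
  assumes L: "L \<subseteq> {1..d}" "L \<noteq> {}" and c: "c \<in> grid_cells"
    and A: "\<And>i. i \<in> L \<Longrightarrow> A i \<in> sets borel"
  shows "emeasure (marg L patchwork) (PiE L (\<lambda>i. slot c i \<inter> A i)) =
    ennreal (cell_box_mass c (\<lambda>i. if i \<in> L then A i else UNIV))"
proof -
  obtain l where l: "l \<in> L" using L(2) by blast
  have "(\<Sum>c'\<in>grid_cells. cell_box_mass c' (\<lambda>i. if i \<in> L then slot c i \<inter> A i else UNIV)) =
      cell_box_mass c (\<lambda>i. if i \<in> L then slot c i \<inter> A i else UNIV)"
    using l L(1) by (intro sum_cell_box_mass_single[OF c, of l]) auto
  also have "\<dots> = cell_box_mass c (\<lambda>i. if i \<in> L then A i else UNIV)"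
    by (intro cell_box_mass_cong) auto
  finally show ?thesis using A by (simp add: emeasure_marg_patchwork_PiE[OF L(1)])
qed

lemma patch_cond_df_measurable [measurable]:
  assumes "L \<subseteq> {1..d}"
  shows "(\<lambda>t. patch_cond_df L j t s) \<in> borel_measurable (PiM L (\<lambda>_. borel))"
proof -
  have "PiE L (slot c) \<in> sets (PiM L (\<lambda>_. borel))" for c
    using finite_subset[OF assms] by (intro sets_PiM_I_finite) auto
  then show ?thesis unfolding patch_cond_df_def by measurable
qed

lemma nn_integral_prod_patch_cond_df:
  assumes L: "L \<subseteq> {1..d}" "L \<noteq> {}" and M: "M \<subseteq> {1..d}" "M \<noteq> {}" "L \<inter> M = {}"
    and A: "\<And>i. i \<in> L \<Longrightarrow> A i \<in> sets borel"
  shows "(\<integral>\<^sup>+t. ennreal (\<Prod>j\<in>M. patch_cond_df L j t (u j)) * indicator (PiE L A) t \<partial>marg L patchwork) =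
    emeasure patchwork (PiE {1..d} (\<lambda>i. if i \<in> L then A i else if i \<in> M then {..u i} else UNIV))"
proof -
  have finM: "finite M" using M(1) finite_subset by blast
  define g where "g c = (\<Prod>j\<in>M. slot_df c j (u j))" for c
  have g: "0 \<le> g c" for c unfolding g_def by (intro prod_nonneg slot_df_nonneg)
  have "(\<integral>\<^sup>+t. ennreal (\<Prod>j\<in>M. patch_cond_df L j t (u j)) * indicator (PiE L A) t \<partial>marg L patchwork)
      = (\<integral>\<^sup>+t. ennreal (\<Sum>c\<in>grid_cells. g c * indicator (PiE L (\<lambda>i. slot c i \<inter> A i)) t)
          \<partial>marg L patchwork)"
  proof (rule nn_integral_cong)
    fix t
    have "ennreal (\<Prod>j\<in>M. patch_cond_df L j t (u j)) * indicator (PiE L A) t =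
        ennreal ((\<Prod>j\<in>M. patch_cond_df L j t (u j)) * indicator (PiE L A) t)"
      by (simp add: ennreal_mult' ennreal_indicator[symmetric] prod_nonneg patch_cond_df_nonneg)
    also have "(\<Prod>j\<in>M. patch_cond_df L j t (u j)) * indicator (PiE L A) t =
        (\<Sum>c\<in>grid_cells. g c * indicator (PiE L (\<lambda>i. slot c i \<inter> A i)) t)"
      unfolding prod_patch_cond_df[OF L finM M(2)] sum_distrib_right g_def
      by (intro sum.cong) (auto simp: indicator_def PiE_def Pi_def)
    finally show "ennreal (\<Prod>j\<in>M. patch_cond_df L j t (u j)) * indicator (PiE L A) t =
        ennreal (\<Sum>c\<in>grid_cells. g c * indicator (PiE L (\<lambda>i. slot c i \<inter> A i)) t)" .
  qed
  also have "\<dots> = (\<Sum>c\<in>grid_cells. ennreal (g c) * emeasure (marg L patchwork) (PiE L (\<lambda>i. slot c i \<inter> A i)))"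
    using A finite_subset[OF L(1)] g
    by (intro nn_integral_sum_mult_indicator finite_grid_cells)
      (auto simp: sets_marg sets_PiM_I_finite)
  also have "\<dots> = (\<Sum>c\<in>grid_cells. ennreal (g c * cell_box_mass c (\<lambda>i. if i \<in> L then A i else UNIV)))"
    using A g cell_box_mass_nonneg
    by (intro sum.cong refl) (simp add: emeasure_marg_patchwork_slot_box[OF L] ennreal_mult)
  also have "\<dots> = (\<Sum>c\<in>grid_cells. ennreal (cell_box_mass c
      (\<lambda>i. if i \<in> L then A i else if i \<in> M then {..u i} else UNIV)))"
  proof (intro sum.cong refl arg_cong[where f = ennreal])
    fix c
    have "(\<lambda>i. if i \<in> L then A i else if i \<in> M then {..u i} else UNIV) =
        (\<lambda>i. if i \<in> M then {..u i} else if i \<in> L then A i else UNIV)"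
      using M(3) by (auto simp: fun_eq_iff)
    moreover have "(\<lambda>i. if i \<in> M then UNIV else if i \<in> L then A i else UNIV) =
        (\<lambda>i. if i \<in> L then A i else UNIV)"
      using M(3) by (auto simp: fun_eq_iff)
    ultimately show "g c * cell_box_mass c (\<lambda>i. if i \<in> L then A i else UNIV) =
        cell_box_mass c (\<lambda>i. if i \<in> L then A i else if i \<in> M then {..u i} else UNIV)"
      using cell_box_mass_prod[OF finM M(1), of c "\<lambda>i. {..u i}" "\<lambda>i. if i \<in> L then A i else UNIV"]
      by (simp add: g_def slot_df_def)
  qed
  also have "\<dots> = emeasure patchwork (PiE {1..d} (\<lambda>i. if i \<in> L then A i else if i \<in> M then {..u i} else UNIV))"
    using A cell_box_mass_nonneg
    by (subst emeasure_patchwork_PiE) (auto simp: sum_ennreal)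
  finally show ?thesis .
qed


lemma prob_space_marg_patchwork: "J \<subseteq> {1..d} \<Longrightarrow> prob_space (marg J patchwork)"
  using prob_space_marg[OF copula_onD(1)[OF copula_on_patchwork] sets_patchwork] .

lemma AE_cond_df_eq_patch_cond_df:
  assumes J: "J \<subseteq> {1..d}" and L: "L \<subseteq> J" "L \<noteq> {}" and j: "j \<in> J - L"
    and rcd: "is_rcd L (J - L) (marg J patchwork) K"
  shows "AE t in marg L patchwork. cond_df K j t s = patch_cond_df L j t s"
proof -
  have LJ: "L \<union> (J - L) = J" using L by auto
  have LD: "L \<subseteq> {1..d}" using J L by auto
  have "AE t in marg L (marg J patchwork). cond_df K j t s = patch_cond_df L j t s"
  proof (rule AE_cond_df_eq_if_cylinder_integrals[OF rcd])
    show "prob_space (marg J patchwork)" by (rule prob_space_marg_patchwork[OF J])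
    show "sets (marg J patchwork) = sets (PiM (L \<union> (J - L)) (\<lambda>_. borel))"
      unfolding LJ by (rule sets_marg)
    show "finite (L \<union> (J - L))" using J LJ finite_subset by auto
    fix A :: "nat \<Rightarrow> real set" assume A: "\<And>i. i \<in> L \<Longrightarrow> A i \<in> sets borel"
    have "(\<lambda>i. if i \<in> J then if i \<in> L then A i else if i = j then {..s} else UNIV else UNIV) =
        (\<lambda>i. if i \<in> L then A i else if i \<in> {j} then {..s} else UNIV)"
      using L j by (auto simp: fun_eq_iff)
    then have "emeasure (marg J patchwork)
        (PiE (L \<union> (J - L)) (\<lambda>i. if i \<in> L then A i else if i = j then {..s} else UNIV)) =
        emeasure patchwork (PiE {1..d} (\<lambda>i. if i \<in> L then A i else if i \<in> {j} then {..s} else UNIV))"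
      unfolding LJ using A J
      by (subst emeasure_marg_PiE[OF sets_patchwork J]) (auto intro: finite_subset)
    also have "\<dots> = (\<integral>\<^sup>+t. ennreal (patch_cond_df L j t s) * indicator (PiE L A) t \<partial>marg L patchwork)"
      using nn_integral_prod_patch_cond_df[OF LD L(2), of "{j}" A "\<lambda>_. s"] A J j by auto
    finally show "emeasure (marg J patchwork)
        (PiE (L \<union> (J - L)) (\<lambda>i. if i \<in> L then A i else if i = j then {..s} else UNIV)) =
        (\<integral>\<^sup>+t. ennreal (patch_cond_df L j t s) * indicator (PiE L (\<lambda>i. A i)) t
          \<partial>marg L (marg J patchwork))"
      using marg_marg[OF sets_patchwork L(1) J] by simp
  qed (use j LD patch_cond_df_nonneg in auto)
  then show ?thesis unfolding marg_marg[OF sets_patchwork L(1) J] .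
qed

lemma AE_in_slot_boxes:
  assumes L: "L \<subseteq> {1..d}" "L \<noteq> {}"
  shows "AE t in marg L patchwork. \<exists>c\<in>grid_cells. t \<in> PiE L (slot c)"
proof -
  interpret N: prob_space "marg L patchwork" using prob_space_marg_patchwork[OF L(1)] .
  have box: "PiE L (slot c) \<in> N.events" for c
    using finite_subset[OF L(1)] by (simp add: sets_marg sets_PiM_I_finite)
  have "emeasure (marg L patchwork) (PiE L (slot c)) = ennreal (cell_mass c)" if "c \<in> grid_cells" for c
    using emeasure_marg_patchwork_slot_box[OF L that, of "\<lambda>_. UNIV"]
    by (simp add: cell_box_mass_UNIV)
  then have "emeasure (marg L patchwork) (\<Union>c\<in>grid_cells. PiE L (slot c)) = 1"
    using box slot_boxes_disjoint[OF L] finite_grid_cells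
    by (subst sum_emeasure[symmetric])
       (auto simp: disjoint_family_on_def sum_ennreal cell_mass_nonneg sum_cell_mass)
  then have "AE t in marg L patchwork. t \<in> (\<Union>c\<in>grid_cells. PiE L (slot c))"
    by (intro N.AE_prob_1) (simp add: N.emeasure_eq_measure)
  then show ?thesis by auto
qed

lemma AE_continuous_cond_df:
  assumes J: "J \<subseteq> {1..d}" and L: "L \<subseteq> J" "L \<noteq> {}" and j: "j \<in> J - L"
    and rcd: "is_rcd L (J - L) (marg J patchwork) K"
  shows "AE t in marg L patchwork. continuous_on UNIV (cond_df K j t)"
proof -
  have LD: "L \<subseteq> {1..d}" using J L by auto
  have "AE t in marg L patchwork. \<forall>q\<in>\<rat>. cond_df K j t q = patch_cond_df L j t q"
    using AE_cond_df_eq_patch_cond_df[OF J L j rcd]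
      by (subst AE_ball_countable) (auto intro: countable_rat)
  with AE_in_slot_boxes[OF LD L(2)] AE_space show ?thesis
  proof eventually_elim
    case (elim t)
    then obtain c where c: "c \<in> grid_cells" "t \<in> PiE L (slot c)" by blast
    have "cond_df K j t = slot_df c j"
    proof (rule eq_if_right_continuous_continuous_eq_on_Rats)
      show "continuous (at_right s) (cond_df K j t)" for s
        using cond_df_right_continuous[OF rcd _ ] elim j by (simp add: space_marg)
      show "cond_df K j t q = slot_df c j q" if "q \<in> \<rat>" for q
        using elim that patch_cond_df_eq_slot_df[OF LD L(2) c] by simp
    qed (rule continuous_slot_df)
    then show ?case using continuous_slot_df by simp
  qed
qed

lemma emeasure_patchwork_PiE_cong:
  assumes A: "\<And>i. i \<in> {1..d} \<Longrightarrow> A i \<in> sets borel" and B: "\<And>i. i \<in> {1..d} \<Longrightarrow> B i \<in> sets borel"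
    and AB: "\<And>i. i \<in> {1..d} \<Longrightarrow> A i \<inter> {0<..1} = B i \<inter> {0<..1}"
  shows "emeasure patchwork (PiE {1..d} A) = emeasure patchwork (PiE {1..d} B)"
proof -
  have "cell_box_mass c A = cell_box_mass c B" if "c \<in> grid_cells" for c
  proof (rule cell_box_mass_cong)
    fix i assume i: "i \<in> {1..d}"
    then have "slot c i \<inter> A i = slot c i \<inter> (A i \<inter> {0<..1})"
      "slot c i \<inter> B i = slot c i \<inter> (B i \<inter> {0<..1})"
      using slot_subset_unit[OF that i] by auto
    then show "slot c i \<inter> A i = slot c i \<inter> B i" using AB[OF i] by simp
  qed
  then have "(\<Sum>c\<in>grid_cells. cell_box_mass c A) = (\<Sum>c\<in>grid_cells. cell_box_mass c B)"
    by (rule sum.cong[OF refl])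
  moreover have "emeasure patchwork (PiE {1..d} A) = ennreal (\<Sum>c\<in>grid_cells. cell_box_mass c A)"
    by (rule emeasure_patchwork_PiE) (rule A)
  moreover have "emeasure patchwork (PiE {1..d} B) = ennreal (\<Sum>c\<in>grid_cells. cell_box_mass c B)"
    by (rule emeasure_patchwork_PiE) (rule B)
  ultimately show ?thesis by simp
qed

lemma integral_indicator_prod_patch_cond_df:
  assumes L: "L \<subseteq> {1..d}" "L \<noteq> {}" and M: "M \<subseteq> {1..d}" "M \<noteq> {}" "L \<inter> M = {}"
  shows "(\<integral>t. indicator {t. \<forall>l\<in>L. 0 \<le> t l \<and> t l \<le> u l} t * (\<Prod>j\<in>M. patch_cond_df L j t (u j))
      \<partial>marg L patchwork) =
    measure patchwork (PiE {1..d} (\<lambda>i. if i \<in> L then {0..u i} else if i \<in> M then {..u i} else UNIV))"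
proof -
  let ?S = "{t. \<forall>l\<in>L. 0 \<le> t l \<and> t l \<le> u l}"
  let ?B = "PiE L (\<lambda>l. {0..u l})"
  have B: "?B \<in> sets (marg L patchwork)"
    using finite_subset[OF L(1)] by (simp add: sets_marg sets_PiM_I_finite)
  have "?S \<inter> space (marg L patchwork) = ?B" by (auto simp: space_marg PiE_def Pi_def)
  then have S: "(indicator ?S :: _ \<Rightarrow> real) \<in> borel_measurable (marg L patchwork)"
    using B by (simp add: borel_measurable_indicator_iff)
  have cond: "(\<lambda>t. patch_cond_df L j t s) \<in> borel_measurable (marg L patchwork)" for j s
    using patch_cond_df_measurable[OF L(1)] by (simp add: sets_marg cong: measurable_cong_sets)
  have "(\<integral>t. indicator ?S t * (\<Prod>j\<in>M. patch_cond_df L j t (u j)) \<partial>marg L patchwork) =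
      enn2real (\<integral>\<^sup>+t. ennreal (indicator ?S t * (\<Prod>j\<in>M. patch_cond_df L j t (u j))) \<partial>marg L patchwork)"
  proof (rule integral_eq_nn_integral)
    show "(\<lambda>t. indicator ?S t * (\<Prod>j\<in>M. patch_cond_df L j t (u j))) \<in> borel_measurable (marg L patchwork)"
      using S cond by (intro borel_measurable_times borel_measurable_prod) auto
    show "AE t in marg L patchwork. 0 \<le> indicator ?S t * (\<Prod>j\<in>M. patch_cond_df L j t (u j))"
      by (intro AE_I2 mult_nonneg_nonneg prod_nonneg patch_cond_df_nonneg) auto
  qed
  also have "(\<integral>\<^sup>+t. ennreal (indicator ?S t * (\<Prod>j\<in>M. patch_cond_df L j t (u j))) \<partial>marg L patchwork) =
      (\<integral>\<^sup>+t. ennreal (\<Prod>j\<in>M. patch_cond_df L j t (u j)) * indicator ?B t \<partial>marg L patchwork)"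
    by (intro nn_integral_cong) (auto simp: space_marg indicator_def PiE_def Pi_def)
  also have "\<dots> = emeasure patchwork
      (PiE {1..d} (\<lambda>i. if i \<in> L then {0..u i} else if i \<in> M then {..u i} else UNIV))"
    by (rule nn_integral_prod_patch_cond_df[OF L M]) simp
  finally show ?thesis by (simp add: measure_def)
qed

lemma integral_indep_copula_cond_df:
  assumes J: "J \<subseteq> {1..d}" and L: "L \<subseteq> J" "L \<noteq> {}"
    and rcd: "is_rcd L (J - L) (marg J patchwork) K"
    and f: "f \<in> borel_measurable (marg L patchwork)"
  shows "(\<integral>t. f t * cdf_on (J - L) (indep_copula (J - L)) (\<lambda>j. cond_df K j t (u j)) \<partial>marg L patchwork) =
    (\<integral>t. f t * (\<Prod>j\<in>J - L. patch_cond_df L j t (u j)) \<partial>marg L patchwork)"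
proof -
  have finM: "finite (J - L)" using J finite_subset by blast
  have LD: "L \<subseteq> {1..d}" using J L by auto
  have "(\<integral>t. f t * cdf_on (J - L) (indep_copula (J - L)) (\<lambda>j. cond_df K j t (u j)) \<partial>marg L patchwork) =
      (\<integral>t. f t * (\<Prod>j\<in>J - L. cond_df K j t (u j)) \<partial>marg L patchwork)"
    using cond_df_nonneg_le_1[OF rcd]
    by (intro Bochner_Integration.integral_cong refl)
      (simp add: cdf_on_indep_copula[OF finM] space_marg)
  also have "\<dots> = (\<integral>t. f t * (\<Prod>j\<in>J - L. patch_cond_df L j t (u j)) \<partial>marg L patchwork)"
  proof (rule integral_cong_AE)
    show "(\<lambda>t. f t * (\<Prod>j\<in>J - L. cond_df K j t (u j))) \<in> borel_measurable (marg L patchwork)"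
      using f cond_df_measurable[OF rcd] marg_marg[OF sets_patchwork L(1) J]
      by (intro borel_measurable_times borel_measurable_prod) auto
    have "(\<lambda>t. patch_cond_df L j t s) \<in> borel_measurable (marg L patchwork)" for j s
      using patch_cond_df_measurable[OF LD] by (simp add: sets_marg cong: measurable_cong_sets)
    then show "(\<lambda>t. f t * (\<Prod>j\<in>J - L. patch_cond_df L j t (u j))) \<in> borel_measurable (marg L patchwork)"
      using f by (intro borel_measurable_times borel_measurable_prod) auto
    have "AE t in marg L patchwork. \<forall>j\<in>J - L. cond_df K j t (u j) = patch_cond_df L j t (u j)"
      using finM AE_cond_df_eq_patch_cond_df[OF J L _ rcd] by (intro AE_finite_allI) auto
    then show "AE t in marg L patchwork.
        f t * (\<Prod>j\<in>J - L. cond_df K j t (u j)) = f t * (\<Prod>j\<in>J - L. patch_cond_df L j t (u j))"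
      by eventually_elim simp
  qed
  finally show ?thesis .
qed

lemma cdf_on_marg_patchwork_eq_integral:
  assumes J: "J \<subseteq> {1..d}" and L: "L \<subseteq> J" "L \<noteq> {}" "J - L \<noteq> {}"
    and rcd: "is_rcd L (J - L) (marg J patchwork) K" and u: "u \<in> cube J"
  shows "cdf_on J (marg J patchwork) u =
    (\<integral>t. indicator {t. \<forall>l\<in>L. 0 \<le> t l \<and> t l \<le> u l} t *
      cdf_on (J - L) (indep_copula (J - L)) (\<lambda>j. cond_df K j t (u j)) \<partial>marg L patchwork)"
proof -
  let ?S = "{t. \<forall>l\<in>L. 0 \<le> t l \<and> t l \<le> u l}"
  have LD: "L \<subseteq> {1..d}" and M: "J - L \<subseteq> {1..d}" "L \<inter> (J - L) = {}" using J L by auto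
  have S: "(indicator ?S :: _ \<Rightarrow> real) \<in> borel_measurable (marg L patchwork)"
  proof -
    have "?S \<inter> space (marg L patchwork) = PiE L (\<lambda>l. {0..u l})"
      by (auto simp: space_marg PiE_def Pi_def)
    moreover have "PiE L (\<lambda>l. {0..u l}) \<in> sets (marg L patchwork)"
      using finite_subset[OF LD] by (simp add: sets_marg sets_PiM_I_finite)
    ultimately show ?thesis by (simp add: borel_measurable_indicator_iff)
  qed
  have "cdf_on J (marg J patchwork) u = measure (marg J patchwork) (PiE J (\<lambda>i. {..u i}))"
    unfolding cdf_on_def
      by (rule arg_cong[where f = "measure _"]) (auto simp: space_marg PiE_def Pi_def)
  also have "\<dots> = measure patchwork (PiE {1..d} (\<lambda>i. if i \<in> J then {..u i} else UNIV))"
    using emeasure_marg_PiE[OF sets_patchwork J, of "\<lambda>i. {..u i}"] finite_subset[OF J]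
    by (simp add: measure_def)
  also have "\<dots> = measure patchwork
      (PiE {1..d} (\<lambda>i. if i \<in> L then {0..u i} else if i \<in> J - L then {..u i} else UNIV))"
    using u L(1) unfolding measure_def cube_def
    by (intro arg_cong[where f = enn2real] emeasure_patchwork_PiE_cong) auto
  also have "\<dots> = (\<integral>t. indicator ?S t * (\<Prod>j\<in>J - L. patch_cond_df L j t (u j)) \<partial>marg L patchwork)"
    by (rule integral_indicator_prod_patch_cond_df[OF LD L(2) M(1) L(3) M(2), symmetric])
  also have "\<dots> = (\<integral>t. indicator ?S t *
      cdf_on (J - L) (indep_copula (J - L)) (\<lambda>j. cond_df K j t (u j)) \<partial>marg L patchwork)"
    by (rule integral_indep_copula_cond_df[OF J L(1,2) rcd S, symmetric])
  finally show ?thesis .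
qed

lemma univ_simplified_patchwork: "univ_simplified d patchwork"
  unfolding univ_simplified_def
proof (intro allI impI conjI)
  fix J L :: "nat set" and K
  assume "J \<subseteq> {1..d} \<and> 2 \<le> card J \<and> L \<subseteq> J \<and> 1 \<le> card L \<and> card L \<le> card J - 2 \<and>
    is_rcd L (J - L) (marg J patchwork) K"
  then have J: "J \<subseteq> {1..d}" and L: "L \<subseteq> J" "L \<noteq> {}" "J - L \<noteq> {}"
    and rcd: "is_rcd L (J - L) (marg J patchwork) K"
    by auto
  show "\<exists>A. copula_on (J - L) A \<and> (\<forall>u\<in>cube J. cdf_on J (marg J patchwork) u =
      (\<integral>t. indicator {t. \<forall>l\<in>L. 0 \<le> t l \<and> t l \<le> u l} t *
        cdf_on (J - L) A (\<lambda>j. cond_df K j t (u j)) \<partial>marg L patchwork))"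
    using J finite_subset cdf_on_marg_patchwork_eq_integral[OF J L rcd]
    by (intro exI[of _ "indep_copula (J - L)"] conjI ballI copula_on_indep_copula) auto
  show "\<forall>j\<in>J - L. AE t in marg L patchwork. continuous_on UNIV (cond_df K j t)"
    using AE_continuous_cond_df[OF J L(1,2) _ rcd] by blast
qed

end

theorem corollary7p2:
  fixes d :: nat
  assumes "3 \<le> d"
  shows "\<forall>\<mu>. copula_on {1..d} \<mu> \<longrightarrow>
           (\<forall>\<epsilon>>0. \<exists>\<nu>. copula_on {1..d} \<nu> \<and> univ_simplified d \<nu> \<and> copula_dist d \<mu> \<nu> < \<epsilon>)"
proof (intro allI impI)
  fix \<mu> :: "(nat \<Rightarrow> real) measure" and \<epsilon> :: real
  assume \<mu>: "copula_on {1..d} \<mu>" and \<epsilon>: "0 < \<epsilon>"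
  obtain n :: nat where n: "real d / \<epsilon> < n" using reals_Archimedean2 by blast
  moreover have "0 < real d / \<epsilon>" using assms \<epsilon> by simp
  ultimately have n_pos: "0 < n" by simp
  have "real d < \<epsilon> * n" using n \<epsilon> by (simp add: divide_less_eq mult.commute)
  then have dist: "real d / n < \<epsilon>" using n_pos by (simp add: divide_less_eq mult.commute)
  interpret grid_patchwork d n \<mu> using assms n_pos \<mu> by unfold_locales auto
  show "\<exists>\<nu>. copula_on {1..d} \<nu> \<and> univ_simplified d \<nu> \<and> copula_dist d \<mu> \<nu> < \<epsilon>"
    using copula_on_patchwork univ_simplified_patchwork copula_dist_patchwork dist
    by (intro exI[of _ patchwork]) auto
qed

end
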